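(* Assume the standing setting and hypotheses (H1), (H2), (H3) below, let $p\in[1,+\infty]$, and equip $X$ and $Y$ with $\|\cdot\|_p$. The following are equivalent: (i) the system (P) with state space $X$ is exp-ISS w.r.t. inputs in $\mathcal{U}$: there are $M,a>0$ and $\gamma\in\mathcal{K}_\infty$ with $\|\phi(t,x,u)\|_p\le Me^{-at}\|x\|_p+\gamma(\|u\|_{\mathcal{U}})$ for all $t\ge0$, $x\in X$, $u\in\mathcal{U}(x)$; (ii) the same estimate holds for all $t\ge0$, $x\in X$ and all $u\in\mathcal{U}(x)$ which are constant in time (i.e. $u(t,z)=u(0,z)$ for all $t\ge0$, $z\in\partial G$); (iii) the system (Q) with state space $Y$ is exp-ISS w.r.t. inputs in $\mathcal{V}$: there are $M,a>0$, $\gamma\in\mathcal{K}_\infty$ with $\|\phi_Y(t,y,v)\|_p\le Me^{-at}\|y\|_p+\gamma(\|v\|_{\mathcal{V}})$ for all $t\ge0$, $y\in Y$, $v\in\mathcal{V}$.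
   Context: Standing setting: $G\subset\mathbb{R}^n$ open and bounded; $CL=C^0(\mathbb{R}_+\times\overline G)\cap C^{1,2}((0,\infty)\times G)$; $x[t]:=x(t,\cdot)$. $L$: $(Lx)(t,z)=\partial_tx-\sum_{i,j=1}^na_{ij}(z)\partial_{z_i}\partial_{z_j}x-f(z,x,\nabla x)$, $a_{ij}\in C^0(\overline G)$, $f\in C^0(\overline G\times\mathbb{R}\times\mathbb{R}^n)$, uniformly parabolic ($\sum a_{ij}(z)\xi_i\xi_j\ge K|\xi|^2$, $K>0$). Problem (P): $Lx=0$ on $(0,\infty)\times G$, $x(0,\cdot)=x_0$ on $G$, $x=u$ on $\mathbb{R}_+\times\partial G$. $\mathcal{U}=\{u\in C^0(\mathbb{R}_+;C^0(\partial G)):u\text{ bounded}\}$, $\|u\|_{\mathcal{U}}=\sup_{t\ge0,z\in\partial G}|u(t,z)|$, ordered pointwise. $\phi(t,x_0,u)=x[t]$ denotes the unique classical solution of (P). (H1) There is a linear space $X\subseteq C^0(\overline G)$ containing all constant functions, and for each $x_0\in X$ a nonempty set $\mathcal{U}(x_0)\subseteq\{v\in\mathcal{U}:v(0,z)=x_0(z)\ \forall z\in\partial G\}$ containing every $v\in\mathcal{U}$ with $v(t,z)=x_0(z)$ for all $z\in\partial G$, $t\ge0$, such that for every $x_0\in X$, $u\in\mathcal{U}(x_0)$ problem (P) has a solution $x\in CL$ with $x[t]\in X$ for all $t\ge0$. (H2) For every bounded $W\subset\mathbb{R}$ there is $k>0$ with $f(z,w_1,\xi)-f(z,w_2,\xi)<k(w_1-w_2)$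 for all $w_1>w_2$ in $W$, $z\in G$, $\xi\in\mathbb{R}^n$; and $f$ is continuously differentiable w.r.t. $(w,\xi)$. (H3) For every $\delta>0$, $a\in\mathbb{R}$, $x\in X$ there is a continuous $k:\overline G\to[0,1]$ with $k=1$ on $\partial G$, $k(z)=0$ whenever $z\in G$ and $\inf_{s\in\partial G}|z-s|\ge\delta$, and $(1-k)x+ak\in X$. System (Q): $\partial_ty-\sum a_{ij}(z)\partial_{z_i}\partial_{z_j}y-f(z,y+v,\nabla y)=0$ on $(0,\infty)\times G$, $y=0$ on $\mathbb{R}_+\times\partial G$, with state space $Y=\{y\in X:y=0\text{ on }\partial G\}$ and inputs $\mathcal{V}=\{v\in C^0(\mathbb{R}_+\times\overline G):v\equiv k\text{ for some }k\in\mathbb{R}\}$, $\|v\|_{\mathcal{V}}=|k|$. Its solution is $\phi_Y(t,y,v)=\phi(t,y+v,v|_{\partial G})-v$. $\mathcal{K}_\infty$: continuous, strictly increasing, unbounded $\gamma:\mathbb{R}_+\to\mathbb{R}_+$ with $\gamma(0)=0$. *)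

theory Defs
  imports "HOL-Analysis.Analysis"
begin

type_synonym 'n pt = "real^'n"

definition partial_at :: "('n::finite pt \<Rightarrow> real) \<Rightarrow> 'n \<Rightarrow> 'n pt \<Rightarrow> real \<Rightarrow> bool" where
  "partial_at g i z d \<longleftrightarrow> ((\<lambda>h. g (z + h *\<^sub>R axis i 1)) has_real_derivative d) (at 0)"

definition C12_derivs ::
  "'n::finite pt set \<Rightarrow> (real \<Rightarrow> 'n pt \<Rightarrow> real) \<Rightarrow> (real \<Rightarrow> 'n pt \<Rightarrow> real)
   \<Rightarrow> ('n \<Rightarrow> real \<Rightarrow> 'n pt \<Rightarrow> real) \<Rightarrow> ('n \<Rightarrow> 'n \<Rightarrow> real \<Rightarrow> 'n pt \<Rightarrow> real) \<Rightarrow> bool" where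
  "C12_derivs G x xt Dx Dxx \<longleftrightarrow>
     (\<forall>t>0. \<forall>z\<in>G.
        ((\<lambda>s. x s z) has_real_derivative xt t z) (at t) \<and>
        (\<forall>i. partial_at (x t) i z (Dx i t z)) \<and>
        (\<forall>i j. partial_at (\<lambda>w. Dx j t w) i z (Dxx i j t z))) \<and>
     continuous_on ({0<..} \<times> G) (\<lambda>(t,z). xt t z) \<and>
     (\<forall>i. continuous_on ({0<..} \<times> G) (\<lambda>(t,z). Dx i t z)) \<and>
     (\<forall>i j. continuous_on ({0<..} \<times> G) (\<lambda>(t,z). Dxx i j t z))"

definition in_CL :: "'n::finite pt set \<Rightarrow> (real \<Rightarrow> 'n pt \<Rightarrow> real) \<Rightarrow> bool" where
  "in_CL G x \<longleftrightarrow> continuous_on ({0..} \<times> closure G) (\<lambda>(t,z). x t z) \<and>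
                 (\<exists>xt Dx Dxx. C12_derivs G x xt Dx Dxx)"

definition classical_solution ::
  "('n \<Rightarrow> 'n \<Rightarrow> 'n::finite pt \<Rightarrow> real) \<Rightarrow> ('n pt \<Rightarrow> real \<Rightarrow> 'n pt \<Rightarrow> real) \<Rightarrow> 'n pt set
   \<Rightarrow> ('n pt \<Rightarrow> real) \<Rightarrow> (real \<Rightarrow> 'n pt \<Rightarrow> real) \<Rightarrow> (real \<Rightarrow> 'n pt \<Rightarrow> real) \<Rightarrow> bool" where
  "classical_solution a f G x0 u x \<longleftrightarrow>
     in_CL G x \<and>
     (\<exists>xt Dx Dxx. C12_derivs G x xt Dx Dxx \<and>
        (\<forall>t>0. \<forall>z\<in>G. xt t z - (\<Sum>i\<in>UNIV. \<Sum>j\<in>UNIV. a i j z * Dxx i j t z)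
                          - f z (x t z) (\<chi> i. Dx i t z) = 0)) \<and>
     (\<forall>z\<in>G. x 0 z = x0 z) \<and>
     (\<forall>t\<ge>0. \<forall>z\<in>frontier G. x t z = u t z)"

text \<open>phi(t,x0,u) = x[t] for the (unique) classical solution x; as a function it is
  taken on closure G (values outside closure G are irrelevant and fixed to undefined).\<close>
definition phi ::
  "('n \<Rightarrow> 'n \<Rightarrow> 'n::finite pt \<Rightarrow> real) \<Rightarrow> ('n pt \<Rightarrow> real \<Rightarrow> 'n pt \<Rightarrow> real) \<Rightarrow> 'n pt set
   \<Rightarrow> real \<Rightarrow> ('n pt \<Rightarrow> real) \<Rightarrow> (real \<Rightarrow> 'n pt \<Rightarrow> real) \<Rightarrow> ('n pt \<Rightarrow> real)" where
  "phi a f G t x0 u = (THE w. \<exists>x. classical_solution a f G x0 u x \<and> w = restrict (x t) (closure G))"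

text \<open>Solution of (Q): phi_Y(t,y,v) = phi(t, y+v, v|\<partial>G) - v.\<close>
definition phiY ::
  "('n \<Rightarrow> 'n \<Rightarrow> 'n::finite pt \<Rightarrow> real) \<Rightarrow> ('n pt \<Rightarrow> real \<Rightarrow> 'n pt \<Rightarrow> real) \<Rightarrow> 'n pt set
   \<Rightarrow> real \<Rightarrow> ('n pt \<Rightarrow> real) \<Rightarrow> (real \<Rightarrow> 'n pt \<Rightarrow> real) \<Rightarrow> ('n pt \<Rightarrow> real)" where
  "phiY a f G t y v = (\<lambda>z. phi a f G t (\<lambda>z. y z + v 0 z) v z - v t z)"

text \<open>Input space \<U>: continuous maps R_+ \<rightarrow> C^0(\<partial>G) (sup-norm topology), bounded.\<close>
definition Ucal :: "'n::finite pt set \<Rightarrow> (real \<Rightarrow> 'n pt \<Rightarrow> real) set" where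
  "Ucal G = {u. (\<forall>t\<ge>0. continuous_on (frontier G) (u t)) \<and>
                (\<forall>t\<ge>0. \<forall>e>0. \<exists>d>0. \<forall>s\<ge>0. \<bar>s - t\<bar> < d \<longrightarrow>
                    (\<forall>z\<in>frontier G. \<bar>u s z - u t z\<bar> \<le> e)) \<and>
                (\<exists>B. \<forall>t\<ge>0. \<forall>z\<in>frontier G. \<bar>u t z\<bar> \<le> B)}"

definition Unorm :: "'n::finite pt set \<Rightarrow> (real \<Rightarrow> 'n pt \<Rightarrow> real) \<Rightarrow> real" where
  "Unorm G u = (SUP q\<in>{0..} \<times> frontier G. \<bar>u (fst q) (snd q)\<bar>)"

definition pnorm :: "'n::finite pt set \<Rightarrow> ereal \<Rightarrow> ('n pt \<Rightarrow> real) \<Rightarrow> real" where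
  "pnorm G p x = (if p = \<infinity> then (SUP z\<in>G. \<bar>x z\<bar>)
     else (LINT z:G|lebesgue. \<bar>x z\<bar> powr real_of_ereal p) powr (1 / real_of_ereal p))"

definition Kinf :: "(real \<Rightarrow> real) \<Rightarrow> bool" where
  "Kinf \<gamma> \<longleftrightarrow> continuous_on {0..} \<gamma> \<and> strict_mono_on {0..} \<gamma> \<and> \<gamma> 0 = 0 \<and>
              (\<forall>B. \<exists>r\<ge>0. \<gamma> r > B)"

definition H1 ::
  "('n \<Rightarrow> 'n \<Rightarrow> 'n::finite pt \<Rightarrow> real) \<Rightarrow> ('n pt \<Rightarrow> real \<Rightarrow> 'n pt \<Rightarrow> real) \<Rightarrow> 'n pt set
   \<Rightarrow> ('n pt \<Rightarrow> real) set \<Rightarrow> (('n pt \<Rightarrow> real) \<Rightarrow> (real \<Rightarrow> 'n pt \<Rightarrow> real) set) \<Rightarrow> bool" where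
  "H1 a f G X Uset \<longleftrightarrow>
     (\<forall>x\<in>X. continuous_on (closure G) x) \<and>
     (\<forall>x\<in>X. \<forall>y\<in>X. (\<lambda>z. x z + y z) \<in> X) \<and>
     (\<forall>x\<in>X. \<forall>c. (\<lambda>z. c * x z) \<in> X) \<and>
     (\<forall>c. (\<lambda>z. c) \<in> X) \<and>
     (\<forall>x0\<in>X.
        Uset x0 \<noteq> {} \<and>
        Uset x0 \<subseteq> {v \<in> Ucal G. \<forall>z\<in>frontier G. v 0 z = x0 z} \<and>
        (\<forall>v\<in>Ucal G. (\<forall>t\<ge>0. \<forall>z\<in>frontier G. v t z = x0 z) \<longrightarrow> v \<in> Uset x0) \<and>
        (\<forall>u\<in>Uset x0. \<exists>x. classical_solution a f G x0 u x \<and> (\<forall>t\<ge>0. x t \<in> X)))"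

definition H2 :: "'n::finite pt set \<Rightarrow> ('n pt \<Rightarrow> real \<Rightarrow> 'n pt \<Rightarrow> real) \<Rightarrow> bool" where
  "H2 G f \<longleftrightarrow>
     (\<forall>W::real set. bounded W \<longrightarrow> (\<exists>k>0. \<forall>w1\<in>W. \<forall>w2\<in>W. w1 > w2 \<longrightarrow>
        (\<forall>z\<in>G. \<forall>\<xi>. f z w1 \<xi> - f z w2 \<xi> < k * (w1 - w2)))) \<and>
     (\<exists>fw f\<xi>.
        (\<forall>z\<in>closure G. \<forall>w \<xi>. ((\<lambda>w'. f z w' \<xi>) has_real_derivative fw z w \<xi>) (at w) \<and>
            (\<forall>i. ((\<lambda>h. f z w (\<xi> + h *\<^sub>R axis i 1)) has_real_derivative f\<xi> i z w \<xi>) (at 0))) \<and>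
        continuous_on (closure G \<times> UNIV \<times> UNIV) (\<lambda>(z,w,\<xi>). fw z w \<xi>) \<and>
        (\<forall>i. continuous_on (closure G \<times> UNIV \<times> UNIV) (\<lambda>(z,w,\<xi>). f\<xi> i z w \<xi>)))"

definition H3 :: "'n::finite pt set \<Rightarrow> ('n pt \<Rightarrow> real) set \<Rightarrow> bool" where
  "H3 G X \<longleftrightarrow>
     (\<forall>\<delta>>0. \<forall>a::real. \<forall>x\<in>X. \<exists>k. continuous_on (closure G) k \<and>
        (\<forall>z\<in>closure G. 0 \<le> k z \<and> k z \<le> 1) \<and>
        (\<forall>z\<in>frontier G. k z = 1) \<and>
        (\<forall>z\<in>G. infdist z (frontier G) \<ge> \<delta> \<longrightarrow> k z = 0) \<and>
        (\<lambda>z. (1 - k z) * x z + a * k z) \<in> X)"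

end

theory Submission
  imports Defs
begin

text \<open>
  For (ii) \<open>\<Longrightarrow>\<close> (iii), a solution of (Q) with state \<open>y\<close> and constant
  input \<open>k\<close> is \<open>x - k\<close>, where \<open>x\<close> solves (P) from \<open>y + k\<close> with the constant boundary data
  \<open>k\<close>; the triangle inequality moves \<open>k\<close> between the norms at the price of a linear gain.

  For (iii) \<open>\<Longrightarrow>\<close> (i), let \<open>C > \<parallel>u\<parallel>\<close>. Using (H3), modify \<open>x\<^sub>0\<close> in a thin boundary layer,
  where \<open>|x\<^sub>0| < C\<close> by uniform continuity, to initial states \<open>x\<^sub>0\<^sup>\<plusminus> \<in> X\<close> with
  \<open>x\<^sub>0\<^sup>- \<le> x\<^sub>0 \<le> x\<^sub>0\<^sup>+\<close> and boundary values \<open>\<plusminus>C\<close>. The comparison principle, a maximum principle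
  argument for \<open>e\<^sup>-\<^sup>k\<^sup>t\<close> times the difference of two solutions based on ellipticity and the
  one-sided Lipschitz bound (H2), shows that the solutions \<open>x\<^sup>\<plusminus>\<close> with the constant inputs \<open>\<plusminus>C\<close>
  enclose \<open>x\<close>. Since \<open>x\<^sup>\<plusminus> \<minusplus> C\<close> solve (Q), the estimate for (Q) bounds \<open>x\<close>; finally let
  \<open>C\<close> decrease to \<open>\<parallel>u\<parallel>\<close>.
\<close>

section \<open>Positive semidefinite quadratic forms\<close>

definition quad_form :: "('n::finite \<Rightarrow> 'n \<Rightarrow> real) \<Rightarrow> ('n \<Rightarrow> real) \<Rightarrow> real" where
  "quad_form S \<xi> = (\<Sum>i\<in>UNIV. \<Sum>j\<in>UNIV. S i j * \<xi> i * \<xi> j)"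

lemma quad_form_add_unit:
  fixes S :: "'n::finite \<Rightarrow> 'n \<Rightarrow> real"
  shows "quad_form S (\<lambda>m. \<xi> m + t * (if m = i then 1 else 0)) =
     quad_form S \<xi> + t * (\<Sum>j\<in>UNIV. S i j * \<xi> j) + t * (\<Sum>k\<in>UNIV. S k i * \<xi> k) + t\<^sup>2 * S i i"
  unfolding quad_form_def
  by (simp add: algebra_simps sum.distrib sum_distrib_left power2_eq_square if_distrib[of "\<lambda>x. _ * x"]
      cong: if_cong) (subst sum.swap, simp add: sum.distrib)

lemma quad_form_unit: "quad_form S (\<lambda>m. if m = i then 1 else 0) = S i i"
  using quad_form_add_unit[of S "\<lambda>_. 0" 1 i] by (simp add: quad_form_def)

context
  fixes S :: "'n::finite \<Rightarrow> 'n \<Rightarrow> real"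
  assumes sym: "\<And>i j. S i j = S j i" and psd: "\<And>\<xi>. quad_form S \<xi> \<ge> 0"
begin

lemma psd_diag_nonneg: "S i i \<ge> 0"
  using psd quad_form_unit by metis

lemma psd_Cauchy_Schwarz:
  assumes pos: "S i i > 0"
  shows "(\<Sum>j\<in>UNIV. S i j * \<xi> j)\<^sup>2 \<le> S i i * quad_form S \<xi>"
proof -
  define b where "b = (\<Sum>j\<in>UNIV. S i j * \<xi> j)"
  have col: "(\<Sum>k\<in>UNIV. S k i * \<xi> k) = b" unfolding b_def by (simp add: sym)
  have "0 \<le> quad_form S (\<lambda>m. \<xi> m + (- b / S i i) * (if m = i then 1 else 0))" by (rule psd)
  also have "\<dots> = quad_form S \<xi> - b\<^sup>2 / S i i"
    unfolding quad_form_add_unit col b_def[symmetric] using pos by (simp add: field_simps power2_eq_square)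
  finally show ?thesis using pos unfolding b_def[symmetric] by (simp add: field_simps)
qed

lemma psd_row_zero_if_diag_zero:
  assumes "S i i = 0"
  shows "S i j = 0"
proof (rule ccontr)
  assume ne: "S i j \<noteq> 0"
  define t where "t = - (S j j + 1) / (2 * S i j)"
  have "0 \<le> quad_form S (\<lambda>m. (if m = j then 1 else 0) + t * (if m = i then 1 else 0))" by (rule psd)
  also have "\<dots> = S j j + 2 * t * S i j"
    unfolding quad_form_add_unit quad_form_unit using assms sym[of j i]
    by (simp add: if_distrib power2_eq_square cong: if_cong)
  also have "\<dots> = -1" using ne by (simp add: t_def field_simps)
  finally show False by simp
qed

text \<open>Subtracting the rank-one matrix \<open>v v\<^sup>T\<close> built from column \<open>i\<close> is one step of a
  Cholesky factorisation: it keeps \<open>S\<close> positive semidefinite and clears row and column \<open>i\<close>.\<close>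
lemma psd_deflation:
  assumes pos: "S i i > 0"
  defines "v \<equiv> \<lambda>k. S k i / sqrt (S i i)"
  shows "quad_form (\<lambda>k j. S k j - v k * v j) \<xi> \<ge> 0"
    and "S i j - v i * v j = 0" and "S j i - v j * v i = 0"
proof -
  have "(\<Sum>k\<in>UNIV. v k * \<xi> k)\<^sup>2 = (\<Sum>k\<in>UNIV. S i k * \<xi> k)\<^sup>2 / S i i"
    using pos by (simp add: v_def sym sum_divide_distrib[symmetric] power_divide)
  also have "\<dots> \<le> quad_form S \<xi>"
    using psd_Cauchy_Schwarz[OF pos] pos by (simp add: field_simps)
  finally show "quad_form (\<lambda>k j. S k j - v k * v j) \<xi> \<ge> 0"
    unfolding quad_form_def power2_eq_square sum_product
    by (simp add: algebra_simps sum_subtractf quad_form_def[symmetric])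
  show "S i j - v i * v j = 0" "S j i - v j * v i = 0"
    using pos by (simp_all add: v_def sym field_simps)
qed

end

lemma trace_product_psd_nonneg_on_support:
  fixes A :: "'n::finite \<Rightarrow> 'n \<Rightarrow> real"
  assumes A: "\<And>\<xi>. quad_form A \<xi> \<ge> 0" and "finite I"
  shows "(\<forall>i j. S i j = S j i) \<Longrightarrow> (\<forall>\<xi>. quad_form S \<xi> \<ge> 0) \<Longrightarrow>
         (\<forall>i j. i \<notin> I \<or> j \<notin> I \<longrightarrow> S i j = 0) \<Longrightarrow> (\<Sum>i\<in>UNIV. \<Sum>j\<in>UNIV. A i j * S i j) \<ge> 0"
  using \<open>finite I\<close>
proof (induction I arbitrary: S rule: finite_induct)
  case (insert i I)
  note sym = insert.prems(1) and psd = insert.prems(2) and supp = insert.prems(3)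
  consider "S i i = 0" | "S i i > 0" using psd_diag_nonneg[of S i] sym psd by force
  then show ?case
  proof cases
    case 1
    then have "S i j = 0" "S j i = 0" for j
      using psd_row_zero_if_diag_zero[of S i j] sym psd by auto
    then have "\<forall>k j. k \<notin> I \<or> j \<notin> I \<longrightarrow> S k j = 0" using supp by (metis insert_iff)
    then show ?thesis using insert.IH sym psd by blast
  next
    case 2
    define v where "v = (\<lambda>k. S k i / sqrt (S i i))"
    define S' where "S' = (\<lambda>k j. S k j - v k * v j)"
    have "\<forall>k j. S' k j = S' j k" using sym by (simp add: S'_def mult.commute)
    moreover have "\<forall>\<xi>. quad_form S' \<xi> \<ge> 0"
      using psd_deflation(1)[of S i] sym psd 2 by (simp add: S'_def v_def)
    moreover have "\<forall>k j. k \<notin> I \<or> j \<notin> I \<longrightarrow> S' k j = 0"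
    proof (intro allI impI)
      fix k j assume "k \<notin> I \<or> j \<notin> I"
      then consider "k = i \<or> j = i" | "k \<notin> insert i I" | "j \<notin> insert i I" by blast
      then show "S' k j = 0"
      proof cases
        case 1 then show ?thesis
          using psd_deflation(2,3)[of S i] sym psd 2 by (auto simp: S'_def v_def)
      next
        case 2 then show ?thesis using supp by (simp add: S'_def v_def)
      next
        case 3 then show ?thesis using supp by (simp add: S'_def v_def)
      qed
    qed
    ultimately have "(\<Sum>k\<in>UNIV. \<Sum>j\<in>UNIV. A k j * S' k j) \<ge> 0" using insert.IH by blast
    moreover have "(\<Sum>k\<in>UNIV. \<Sum>j\<in>UNIV. A k j * S k j) = (\<Sum>k\<in>UNIV. \<Sum>j\<in>UNIV. A k j * S' k j) + quad_form A v"
      unfolding S'_def quad_form_def by (simp add: algebra_simps sum.distrib sum_subtractf)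
    ultimately show ?thesis using A[of v] by simp
  qed
qed simp

lemma trace_product_psd_nonneg:
  fixes A S :: "'n::finite \<Rightarrow> 'n \<Rightarrow> real"
  assumes "\<And>\<xi>. quad_form A \<xi> \<ge> 0" "\<And>i j. S i j = S j i" "\<And>\<xi>. quad_form S \<xi> \<ge> 0"
  shows "(\<Sum>i\<in>UNIV. \<Sum>j\<in>UNIV. A i j * S i j) \<ge> 0"
  using trace_product_psd_nonneg_on_support[OF assms(1), of UNIV S] assms(2,3) by simp

section \<open>Partial derivatives and interior maxima\<close>

lemma partial_at_along_axis:
  assumes "partial_at F i (w + s *\<^sub>R axis i 1) d"
  shows "((\<lambda>s. F (w + s *\<^sub>R axis i 1)) has_real_derivative d) (at s)"
proof -
  have "((\<lambda>h. F (w + (h + s) *\<^sub>R axis i 1)) has_real_derivative d) (at 0)"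
    using assms unfolding partial_at_def by (simp add: algebra_simps scaleR_add_left)
  then show ?thesis using DERIV_shift[of "\<lambda>s. F (w + s *\<^sub>R axis i 1)" d 0 s] by simp
qed

lemma MVT_from_zero:
  fixes \<phi> \<phi>' :: "real \<Rightarrow> real"
  assumes "\<And>s. \<bar>s\<bar> \<le> \<bar>b\<bar> \<Longrightarrow> (\<phi> has_real_derivative \<phi>' s) (at s)"
  shows "\<exists>\<theta>. \<bar>\<theta>\<bar> \<le> \<bar>b\<bar> \<and> \<phi> b - \<phi> 0 = b * \<phi>' \<theta>"
proof (cases b "0::real" rule: linorder_cases)
  case less
  have "\<exists>z>b. z < 0 \<and> \<phi> 0 - \<phi> b = (0 - b) * \<phi>' z"
    by (rule MVT2) (use less in \<open>auto intro!: assms\<close>)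
  then obtain \<theta> where "b < \<theta>" "\<theta> < 0" "\<phi> 0 - \<phi> b = (0 - b) * \<phi>' \<theta>" by blast
  then show ?thesis by (intro exI[of _ \<theta>]) (auto simp: algebra_simps)
next
  case greater
  have "\<exists>z>0. z < b \<and> \<phi> b - \<phi> 0 = (b - 0) * \<phi>' z"
    by (rule MVT2) (use greater in \<open>auto intro!: assms\<close>)
  then obtain \<theta> where "0 < \<theta>" "\<theta> < b" "\<phi> b - \<phi> 0 = (b - 0) * \<phi>' \<theta>" by blast
  then show ?thesis by (intro exI[of _ \<theta>]) auto
qed auto

lemma axis_increments_approx:
  fixes F :: "real^'n \<Rightarrow> real" and h :: "real^'n"
  assumes pd: "\<And>y i. y \<in> ball z d \<Longrightarrow> partial_at F i y (P i y)"
    and close: "\<And>y i. y \<in> ball z d \<Longrightarrow> \<bar>P i y - P i z\<bar> \<le> e"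
    and small: "(\<Sum>i\<in>UNIV. \<bar>h$i\<bar>) < d"
  shows "\<bar>F (z + (\<Sum>i\<in>J. h$i *\<^sub>R axis i 1)) - F z - (\<Sum>i\<in>J. h$i * P i z)\<bar> \<le> e * (\<Sum>i\<in>J. \<bar>h$i\<bar>)"
  using finite[of J]
proof (induction J rule: finite_induct)
  case (insert j J)
  define w where "w = z + (\<Sum>i\<in>J. h$i *\<^sub>R axis i 1)"
  have in_ball: "w + s *\<^sub>R axis j 1 \<in> ball z d" if "\<bar>s\<bar> \<le> \<bar>h$j\<bar>" for s
  proof -
    have "norm (\<Sum>i\<in>J. h$i *\<^sub>R axis i (1::real)) \<le> (\<Sum>i\<in>J. \<bar>h$i\<bar>)"
      by (rule order_trans[OF norm_sum]) (simp add: norm_axis_1)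
    then have "norm (w + s *\<^sub>R axis j 1 - z) \<le> (\<Sum>i\<in>J. \<bar>h$i\<bar>) + \<bar>s\<bar>"
      using norm_triangle_ineq[of "\<Sum>i\<in>J. h$i *\<^sub>R axis i (1::real)" "s *\<^sub>R axis j 1"]
      by (simp add: w_def norm_axis_1)
    also have "\<dots> \<le> (\<Sum>i\<in>insert j J. \<bar>h$i\<bar>)" using that insert by simp
    also have "\<dots> \<le> (\<Sum>i\<in>UNIV. \<bar>h$i\<bar>)" by (rule sum_mono2) auto
    finally show ?thesis using small by (simp add: dist_norm norm_minus_commute)
  qed
  have "((\<lambda>s. F (w + s *\<^sub>R axis j 1)) has_real_derivative P j (w + s *\<^sub>R axis j 1)) (at s)"
    if "\<bar>s\<bar> \<le> \<bar>h$j\<bar>" for s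
    by (rule partial_at_along_axis[OF pd[OF in_ball[OF that]]])
  then obtain \<theta> where \<theta>: "\<bar>\<theta>\<bar> \<le> \<bar>h$j\<bar>"
    "F (w + h$j *\<^sub>R axis j 1) - F w = h$j * P j (w + \<theta> *\<^sub>R axis j 1)"
    using MVT_from_zero by fastforce
  have "\<bar>F (w + h$j *\<^sub>R axis j 1) - F w - h$j * P j z\<bar> = \<bar>h$j\<bar> * \<bar>P j (w + \<theta> *\<^sub>R axis j 1) - P j z\<bar>"
    using \<theta>(2) by (simp add: abs_mult[symmetric] right_diff_distrib)
  also have "\<dots> \<le> \<bar>h$j\<bar> * e" using close in_ball[OF \<theta>(1)] by (simp add: mult_left_mono)
  finally have step: "\<bar>F (w + h$j *\<^sub>R axis j 1) - F w - h$j * P j z\<bar> \<le> e * \<bar>h$j\<bar>"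
    by (simp add: mult.commute)
  have pt: "z + (\<Sum>i\<in>insert j J. h$i *\<^sub>R axis i 1) = w + h$j *\<^sub>R axis j 1"
    using insert.hyps by (simp add: w_def add_ac)
  have split: "F (z + (\<Sum>i\<in>insert j J. h$i *\<^sub>R axis i 1)) - F z - (\<Sum>i\<in>insert j J. h$i * P i z)
      = (F (w + h$j *\<^sub>R axis j 1) - F w - h$j * P j z) + (F w - F z - (\<Sum>i\<in>J. h$i * P i z))"
    unfolding pt using insert.hyps by simp
  have "\<bar>(F (w + h$j *\<^sub>R axis j 1) - F w - h$j * P j z) + (F w - F z - (\<Sum>i\<in>J. h$i * P i z))\<bar>
      \<le> e * \<bar>h$j\<bar> + e * (\<Sum>i\<in>J. \<bar>h$i\<bar>)"
    by (rule order_trans[OF abs_triangle_ineq add_mono[OF step insert.IH[folded w_def]]])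
  moreover have "e * (\<Sum>i\<in>insert j J. \<bar>h$i\<bar>) = e * \<bar>h$j\<bar> + e * (\<Sum>i\<in>J. \<bar>h$i\<bar>)"
    using insert.hyps by (simp add: distrib_left)
  ultimately show ?case unfolding split by linarith
qed simp

lemma continuous_on_family_ball:
  fixes P :: "'i::finite \<Rightarrow> 'a::metric_space \<Rightarrow> real"
  assumes U: "open U" and z: "z \<in> U" and cont: "\<And>i. continuous_on U (P i)" and e: "e > 0"
  shows "\<exists>d>0. ball z d \<subseteq> U \<and> (\<forall>y\<in>ball z d. \<forall>i. \<bar>P i y - P i z\<bar> \<le> e)"
proof -
  have "\<forall>\<^sub>F y in at z. y \<in> U \<and> (\<forall>i. \<bar>P i y - P i z\<bar> < e)"
  proof (intro eventually_conj eventually_all_finite)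
    show "\<forall>\<^sub>F y in at z. y \<in> U" using U z by (rule eventually_at_in_open')
    fix i
    have "(P i \<longlongrightarrow> P i z) (at z)"
      using cont[of i] U z continuous_on_eq_continuous_at isCont_def by blast
    then show "\<forall>\<^sub>F y in at z. \<bar>P i y - P i z\<bar> < e"
      using e unfolding tendsto_iff dist_real_def by simp
  qed
  then obtain d where d: "d > 0"
    and near: "\<And>y. y \<noteq> z \<Longrightarrow> dist y z < d \<Longrightarrow> y \<in> U \<and> (\<forall>i. \<bar>P i y - P i z\<bar> < e)"
    unfolding eventually_at by blast
  have "y \<in> U \<and> (\<forall>i. \<bar>P i y - P i z\<bar> \<le> e)" if "y \<in> ball z d" for y
    using near[of y] that z e by (cases "y = z") (auto simp: dist_commute less_imp_le)
  then show ?thesis using d by blast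
qed

lemma has_derivative_of_continuous_partials:
  fixes F :: "real^'n \<Rightarrow> real" and P :: "'n \<Rightarrow> real^'n \<Rightarrow> real"
  assumes U: "open U" and z: "z \<in> U" and pd: "\<And>y i. y \<in> U \<Longrightarrow> partial_at F i y (P i y)"
    and pc: "\<And>i. continuous_on U (P i)"
  shows "(F has_derivative (\<lambda>h. \<Sum>i\<in>UNIV. h$i * P i z)) (at z)"
  unfolding has_derivative_at_alt
proof (intro conjI allI impI)
  show "bounded_linear (\<lambda>h::real^'n. \<Sum>i\<in>UNIV. h$i * P i z)"
    by (intro bounded_linear_sum bounded_linear_mult_const bounded_linear_vec_nth)
  fix e :: real assume e: "e > 0"
  define N where "N = real CARD('n)"
  have N: "N \<ge> 1" unfolding N_def by (simp add: Suc_le_eq)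
  have "e / N > 0" using e N by simp
  then have "\<exists>d>0. ball z d \<subseteq> U \<and> (\<forall>y\<in>ball z d. \<forall>i. \<bar>P i y - P i z\<bar> \<le> e / N)"
    by (rule continuous_on_family_ball[OF U z pc])
  then obtain d where d: "d > 0" and ball: "ball z d \<subseteq> U"
    and close: "\<forall>y\<in>ball z d. \<forall>i. \<bar>P i y - P i z\<bar> \<le> e / N"
    by blast
  have ball_U: "\<And>y i. y \<in> ball z d \<Longrightarrow> partial_at F i y (P i y)" using pd ball by blast
  have ball_close: "\<And>y i. y \<in> ball z d \<Longrightarrow> \<bar>P i y - P i z\<bar> \<le> e / N" using close by blast
  show "\<exists>d'>0. \<forall>y. norm (y - z) < d' \<longrightarrow>
          norm (F y - F z - (\<Sum>i\<in>UNIV. (y - z) $ i * P i z)) \<le> e * norm (y - z)"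
  proof (intro exI[of _ "d / N"] conjI allI impI)
    show "d / N > 0" using d N by simp
    fix y assume y: "norm (y - z) < d / N"
    define h where "h = y - z"
    have "(\<Sum>i\<in>UNIV. \<bar>h$i\<bar>) \<le> (\<Sum>i\<in>(UNIV::'n set). norm h)"
      by (intro sum_mono component_le_norm_cart)
    then have l1: "(\<Sum>i\<in>UNIV. \<bar>h$i\<bar>) \<le> N * norm h" by (simp add: N_def)
    also have "\<dots> < d" using y N by (simp add: h_def field_simps)
    finally have "\<bar>F (z + (\<Sum>i\<in>UNIV. h$i *\<^sub>R axis i 1)) - F z - (\<Sum>i\<in>UNIV. h$i * P i z)\<bar>
        \<le> e / N * (\<Sum>i\<in>UNIV. \<bar>h$i\<bar>)"
      by (rule axis_increments_approx[rotated 2]) (use ball_U ball_close in auto)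
    also have "\<dots> \<le> e / N * (N * norm h)" by (rule mult_left_mono[OF l1]) (use e N in simp)
    also have "\<dots> = e * norm h" using N by simp
    finally show "norm (F y - F z - (\<Sum>i\<in>UNIV. (y - z) $ i * P i z)) \<le> e * norm (y - z)"
      using basis_expansion[of h] N by (simp add: scalar_mult_eq_scaleR h_def)
  qed
qed

lemma directional_has_real_derivative:
  fixes F :: "real^'n \<Rightarrow> real" and P :: "'n \<Rightarrow> real^'n \<Rightarrow> real"
  assumes U: "open U" and pd: "\<And>y i. y \<in> U \<Longrightarrow> partial_at F i y (P i y)"
    and pc: "\<And>i. continuous_on U (P i)" and q: "z + s *\<^sub>R \<xi> \<in> U"
  shows "((\<lambda>s. F (z + s *\<^sub>R \<xi>)) has_real_derivative (\<Sum>i\<in>UNIV. \<xi>$i * P i (z + s *\<^sub>R \<xi>))) (at s)"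
proof -
  have "((F \<circ> (\<lambda>s. z + s *\<^sub>R \<xi>)) has_derivative
         ((\<lambda>h. \<Sum>i\<in>UNIV. h$i * P i (z + s *\<^sub>R \<xi>)) \<circ> (\<lambda>s. s *\<^sub>R \<xi>))) (at s)"
    by (intro diff_chain_at has_derivative_of_continuous_partials[OF U q pd pc])
       (auto intro!: derivative_eq_intros)
  then show ?thesis unfolding has_field_derivative_def o_def
    by (rule has_derivative_eq_rhs) (auto simp: sum_distrib_left algebra_simps)
qed

lemma local_max_second_derivative_nonpos:
  fixes g g' :: "real \<Rightarrow> real"
  assumes r: "r > 0" and mx: "\<And>s. \<bar>s\<bar> < r \<Longrightarrow> g s \<le> g 0"
    and dg: "\<And>s. \<bar>s\<bar> < r \<Longrightarrow> (g has_real_derivative g' s) (at s)"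
    and dg': "(g' has_real_derivative c) (at 0)" and g'0: "g' 0 = 0"
  shows "c \<le> 0"
proof (rule ccontr)
  assume "\<not> c \<le> 0"
  then obtain d where d: "d > 0" "\<And>h. h > 0 \<Longrightarrow> h < d \<Longrightarrow> g' 0 < g' (0 + h)"
    using DERIV_pos_inc_right[OF dg'] by force
  define s where "s = min d r / 2"
  have s: "s > 0" "s < d" "s < r" using d r by (auto simp: s_def)
  obtain w where w: "0 < w" "w < s" "g s - g 0 = s * g' w"
    using MVT2[of 0 s g g'] s dg by force
  have "g' w > 0" using d(2)[of w] w s g'0 by simp
  then have "s * g' w > 0" using s by simp
  then have "g s > g 0" using w by simp
  then show False using s mx[of s] by simp
qed

lemma mean_value_second_difference:
  fixes F :: "real^'n \<Rightarrow> real"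
  assumes B: "ball z \<delta> \<subseteq> U" and h: "h > 0" "2 * h < \<delta>"
    and pd: "\<And>y j. y \<in> U \<Longrightarrow> partial_at F j y (P j y)"
    and pd2: "\<And>y i j. y \<in> U \<Longrightarrow> partial_at (P j) i y (P2 i j y)"
  shows "\<exists>q. norm (q - z) < \<delta> \<and>
    F (z + h *\<^sub>R axis i 1 + h *\<^sub>R axis j 1) - F (z + h *\<^sub>R axis i 1) - F (z + h *\<^sub>R axis j 1) + F z
      = h\<^sup>2 * P2 i j q"
proof -
  have near: "norm (a *\<^sub>R axis i (1::real) + b *\<^sub>R axis j 1) < \<delta>"
    if "0 \<le> a" "a \<le> h" "0 \<le> b" "b \<le> h" for a b :: real
  proof -
    have "norm (a *\<^sub>R axis i (1::real) + b *\<^sub>R axis j 1) \<le> a + b"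
      using norm_triangle_ineq[of "a *\<^sub>R axis i (1::real)" "b *\<^sub>R axis j 1"] that by simp
    then show ?thesis using that h by linarith
  qed
  have inU: "z + a *\<^sub>R axis i 1 + b *\<^sub>R axis j 1 \<in> U" if "0 \<le> a" "a \<le> h" "0 \<le> b" "b \<le> h" for a b
  proof -
    have "z + (a *\<^sub>R axis i 1 + b *\<^sub>R axis j 1) \<in> ball z \<delta>"
      using near[OF that] dist_add_cancel[of z 0 "a *\<^sub>R axis i 1 + b *\<^sub>R axis j 1"] by simp
    then show ?thesis using B by (auto simp: add.assoc)
  qed
  define \<phi> where "\<phi> = (\<lambda>s. F ((z + h *\<^sub>R axis i 1) + s *\<^sub>R axis j 1) - F (z + s *\<^sub>R axis j 1))"
  define \<phi>' where "\<phi>' = (\<lambda>s. P j ((z + h *\<^sub>R axis i 1) + s *\<^sub>R axis j 1) - P j (z + s *\<^sub>R axis j 1))"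
  obtain s where s: "0 < s" "s < h" "\<phi> h - \<phi> 0 = h * \<phi>' s"
  proof -
    have "(\<phi> has_real_derivative \<phi>' s) (at s)" if "0 \<le> s" "s \<le> h" for s
      unfolding \<phi>_def \<phi>'_def using inU[of h s] inU[of 0 s] that h
      by (intro DERIV_diff partial_at_along_axis pd) auto
    then show ?thesis using MVT2[of 0 h \<phi> \<phi>'] h that by force
  qed
  define q where "q = (\<lambda>r. (z + s *\<^sub>R axis j 1) + r *\<^sub>R axis i 1)"
  obtain r where r: "0 < r" "r < h" "P j (q h) - P j (q 0) = h * P2 i j (q r)"
  proof -
    have "((\<lambda>r. P j (q r)) has_real_derivative P2 i j (q r)) (at r)" if "0 \<le> r" "r \<le> h" for r
      unfolding q_def using inU[of r s] that s
      by (intro partial_at_along_axis pd2) (auto simp: algebra_simps)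
    then show ?thesis using MVT2[of 0 h "\<lambda>r. P j (q r)" "\<lambda>r. P2 i j (q r)"] h that by force
  qed
  show ?thesis
  proof (intro exI conjI)
    show "norm (q r - z) < \<delta>" using near[of r s] r s by (simp add: q_def algebra_simps)
    have "\<phi>' s = P j (q h) - P j (q 0)" unfolding \<phi>'_def q_def by (simp add: algebra_simps)
    then show "F (z + h *\<^sub>R axis i 1 + h *\<^sub>R axis j 1) - F (z + h *\<^sub>R axis i 1) - F (z + h *\<^sub>R axis j 1) + F z
          = h\<^sup>2 * P2 i j (q r)"
      using s(3) r(3) unfolding \<phi>_def by (simp add: power2_eq_square)
  qed
qed

text \<open>Schwarz's theorem: both orders of differentiation give the same second difference
  quotient, so by continuity the two mixed partials agree.\<close>
lemma mixed_partials_symmetric: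
  fixes F :: "real^'n \<Rightarrow> real"
  assumes U: "open U" and z: "z \<in> U"
    and pd: "\<And>y j. y \<in> U \<Longrightarrow> partial_at F j y (P j y)"
    and pd2: "\<And>y i j. y \<in> U \<Longrightarrow> partial_at (P j) i y (P2 i j y)"
    and pc2: "\<And>i j. continuous_on U (P2 i j)"
  shows "P2 i j z = P2 j i z"
proof (rule ccontr)
  assume ne: "P2 i j z \<noteq> P2 j i z"
  define e where "e = \<bar>P2 i j z - P2 j i z\<bar> / 3"
  have e: "e > 0" using ne by (simp add: e_def)
  have "\<exists>\<delta>>0. ball z \<delta> \<subseteq> U \<and>
      (\<forall>y\<in>ball z \<delta>. \<forall>ij. \<bar>P2 (fst ij) (snd ij) y - P2 (fst ij) (snd ij) z\<bar> \<le> e)"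
    by (rule continuous_on_family_ball[OF U z _ e]) (rule pc2)
  then obtain \<delta> where \<delta>: "\<delta> > 0" and ball: "ball z \<delta> \<subseteq> U"
    and near: "\<forall>y\<in>ball z \<delta>. \<forall>ij. \<bar>P2 (fst ij) (snd ij) y - P2 (fst ij) (snd ij) z\<bar> \<le> e"
    by blast
  have close: "\<bar>P2 i j y - P2 i j z\<bar> \<le> e" "\<bar>P2 j i y - P2 j i z\<bar> \<le> e" if "norm (y - z) < \<delta>" for y
    using near that by (auto simp: dist_norm norm_minus_commute)
  define h where "h = \<delta> / 4"
  have h: "h > 0" "2 * h < \<delta>" using \<delta> by (auto simp: h_def)
  obtain q1 where q1: "norm (q1 - z) < \<delta>"
    "F (z + h *\<^sub>R axis i 1 + h *\<^sub>R axis j 1) - F (z + h *\<^sub>R axis i 1) - F (z + h *\<^sub>R axis j 1) + F z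
      = h\<^sup>2 * P2 i j q1"
    using mean_value_second_difference[OF ball h pd pd2] by blast
  obtain q2 where q2: "norm (q2 - z) < \<delta>"
    "F (z + h *\<^sub>R axis j 1 + h *\<^sub>R axis i 1) - F (z + h *\<^sub>R axis j 1) - F (z + h *\<^sub>R axis i 1) + F z
      = h\<^sup>2 * P2 j i q2"
    using mean_value_second_difference[OF ball h pd pd2] by blast
  have "P2 i j q1 = P2 j i q2" using q1(2) q2(2) h by (simp add: algebra_simps)
  then have "P2 i j z - P2 j i z = (P2 i j z - P2 i j q1) + (P2 j i q2 - P2 j i z)" by simp
  then have "\<bar>P2 i j z - P2 j i z\<bar> \<le> \<bar>P2 i j q1 - P2 i j z\<bar> + \<bar>P2 j i q2 - P2 j i z\<bar>"
    by (metis abs_minus_commute abs_triangle_ineq)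
  also have "\<dots> \<le> e + e" using close(1)[OF q1(1)] close(2)[OF q2(1)] by (rule add_mono)
  finally show False using e by (simp add: e_def)
qed

lemma interior_max_partial_zero:
  fixes F :: "real^'n \<Rightarrow> real"
  assumes U: "open U" and z0: "z0 \<in> U" and mx: "\<And>y. y \<in> U \<Longrightarrow> F y \<le> F z0"
    and pd: "partial_at F i z0 d"
  shows "d = 0"
proof -
  obtain r where r: "r > 0" "ball z0 r \<subseteq> U" using U z0 open_contains_ball by blast
  have "z0 + h *\<^sub>R axis i 1 \<in> U" if "\<bar>h\<bar> < r" for h
    using r(2) that dist_add_cancel[of z0 0 "h *\<^sub>R axis i 1"] by (auto simp: norm_axis_1)
  then have "\<forall>h. \<bar>0 - h\<bar> < r \<longrightarrow> F (z0 + h *\<^sub>R axis i 1) \<le> F (z0 + 0 *\<^sub>R axis i 1)"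
    using mx by simp
  then show ?thesis using DERIV_local_max[OF pd[unfolded partial_at_def] r(1)] by simp
qed

lemma interior_max_hessian_nonpos:
  fixes F :: "real^'n \<Rightarrow> real"
  assumes U: "open U" and z0: "z0 \<in> U" and mx: "\<And>y. y \<in> U \<Longrightarrow> F y \<le> F z0"
    and pd: "\<And>y j. y \<in> U \<Longrightarrow> partial_at F j y (P j y)"
    and pd2: "\<And>y i j. y \<in> U \<Longrightarrow> partial_at (P j) i y (P2 i j y)"
    and pc: "\<And>i. continuous_on U (P i)" and pc2: "\<And>i j. continuous_on U (P2 i j)"
    and gradient: "\<And>i. P i z0 = 0"
  shows "(\<Sum>j\<in>UNIV. \<xi>$j * (\<Sum>i\<in>UNIV. \<xi>$i * P2 i j z0)) \<le> 0"
proof -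
  obtain r where r: "r > 0" "ball z0 r \<subseteq> U" using U z0 open_contains_ball by blast
  show ?thesis
  proof (rule local_max_second_derivative_nonpos[where g = "\<lambda>s. F (z0 + s *\<^sub>R \<xi>)"
        and g' = "\<lambda>s. \<Sum>j\<in>UNIV. \<xi>$j * P j (z0 + s *\<^sub>R \<xi>)" and r = "r / (norm \<xi> + 1)"])
    show "r / (norm \<xi> + 1) > 0" using r by (simp add: add_nonneg_pos)
    fix s :: real assume "\<bar>s\<bar> < r / (norm \<xi> + 1)"
    then have "\<bar>s\<bar> * (norm \<xi> + 1) < r" by (simp add: pos_less_divide_eq add_nonneg_pos)
    moreover have "\<bar>s\<bar> * norm \<xi> \<le> \<bar>s\<bar> * (norm \<xi> + 1)" by (simp add: mult_left_mono)
    ultimately have s: "z0 + s *\<^sub>R \<xi> \<in> U" using r(2) dist_add_cancel[of z0 0 "s *\<^sub>R \<xi>"] by auto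
    then show "F (z0 + s *\<^sub>R \<xi>) \<le> F (z0 + 0 *\<^sub>R \<xi>)" using mx by simp
    show "((\<lambda>s. F (z0 + s *\<^sub>R \<xi>)) has_real_derivative (\<Sum>j\<in>UNIV. \<xi>$j * P j (z0 + s *\<^sub>R \<xi>))) (at s)"
      by (rule directional_has_real_derivative[OF U pd pc s])
  next
    have "((\<lambda>s. P j (z0 + s *\<^sub>R \<xi>)) has_real_derivative (\<Sum>i\<in>UNIV. \<xi>$i * P2 i j z0)) (at 0)" for j
      using directional_has_real_derivative[OF U pd2 pc2, of z0 0 \<xi>] z0 by simp
    then show "((\<lambda>s. \<Sum>j\<in>UNIV. \<xi>$j * P j (z0 + s *\<^sub>R \<xi>)) has_real_derivative
               (\<Sum>j\<in>UNIV. \<xi>$j * (\<Sum>i\<in>UNIV. \<xi>$i * P2 i j z0))) (at 0)"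
      by (auto intro!: DERIV_sum DERIV_cmult)
    show "(\<Sum>j\<in>UNIV. \<xi>$j * P j (z0 + 0 *\<^sub>R \<xi>)) = 0" using gradient by simp
  qed
qed

text \<open>The trace inequality turns negative semidefiniteness of the (symmetric) Hessian into
  \<open>tr(A D\<^sup>2F) \<le> 0\<close>; the matrix \<open>A\<close> need not be symmetric.\<close>
lemma interior_max_conditions:
  fixes F :: "real^'n \<Rightarrow> real" and A :: "'n \<Rightarrow> 'n \<Rightarrow> real"
  assumes U: "open U" and z0: "z0 \<in> U" and mx: "\<And>y. y \<in> U \<Longrightarrow> F y \<le> F z0"
    and pd: "\<And>y j. y \<in> U \<Longrightarrow> partial_at F j y (P j y)"
    and pd2: "\<And>y i j. y \<in> U \<Longrightarrow> partial_at (P j) i y (P2 i j y)"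
    and pc: "\<And>i. continuous_on U (P i)"
    and pc2: "\<And>i j. continuous_on U (P2 i j)"
    and psd: "\<And>\<xi>::real^'n. (\<Sum>i\<in>UNIV. \<Sum>j\<in>UNIV. A i j * \<xi>$i * \<xi>$j) \<ge> 0"
  shows "(\<forall>i. P i z0 = 0) \<and> (\<Sum>i\<in>UNIV. \<Sum>j\<in>UNIV. A i j * P2 i j z0) \<le> 0"
proof -
  have gradient: "P i z0 = 0" for i by (rule interior_max_partial_zero[OF U z0 mx pd[OF z0]])
  have "(\<Sum>i\<in>UNIV. \<Sum>j\<in>UNIV. A i j * (- P2 i j z0)) \<ge> 0"
  proof (rule trace_product_psd_nonneg)
    fix \<xi> :: "'n \<Rightarrow> real"
    show "quad_form A \<xi> \<ge> 0" using psd[of "\<chi> i. \<xi> i"] by (simp add: quad_form_def)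
    have "(\<Sum>j\<in>UNIV. \<Sum>i\<in>UNIV. P2 i j z0 * \<xi> i * \<xi> j) \<le> 0"
      using interior_max_hessian_nonpos[OF U z0 mx pd pd2 pc pc2 gradient, of "\<chi> i. \<xi> i"]
      by (simp add: sum_distrib_left algebra_simps)
    then show "quad_form (\<lambda>i j. - P2 i j z0) \<xi> \<ge> 0"
      unfolding quad_form_def by (subst sum.swap) (simp add: sum_negf)
  next
    fix i j show "- P2 i j z0 = - P2 j i z0"
      using mixed_partials_symmetric[OF U z0 pd pd2 pc2] by simp
  qed
  then show ?thesis using gradient by (simp add: sum_negf)
qed

section \<open>The comparison principle\<close>

lemma left_max_has_real_derivative_nonneg:
  fixes g :: "real \<Rightarrow> real"
  assumes t0: "t0 > 0" and D: "(g has_real_derivative D) (at t0)"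
    and mx: "\<And>s. 0 < s \<Longrightarrow> s \<le> t0 \<Longrightarrow> g s \<le> g t0"
  shows "D \<ge> 0"
proof (rule ccontr)
  assume "\<not> D \<ge> 0"
  then obtain d where d: "d > 0" "\<And>h. h > 0 \<Longrightarrow> h < d \<Longrightarrow> g t0 < g (t0 - h)"
    using DERIV_neg_dec_left[OF D] by force
  define h where "h = min d t0 / 2"
  have "h > 0" "h < d" "h < t0" using d t0 by (auto simp: h_def)
  then show False using d(2)[of h] mx[of "t0 - h"] by simp
qed

lemma continuous_on_slice:
  assumes "continuous_on ({0<..} \<times> G) (\<lambda>(t,z). g t z)" "t > 0"
  shows "continuous_on G (g t)"
proof -
  have "continuous_on G (\<lambda>y. (\<lambda>(t,z). g t z) (t, y))"
    by (rule continuous_on_compose2[OF assms(1)]) (use assms(2) in \<open>auto intro!: continuous_intros\<close>)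
  then show ?thesis by simp
qed

lemma C12_derivs_slice:
  assumes "C12_derivs G x xt Dx Dxx" "t > 0"
  shows "\<And>y j. y \<in> G \<Longrightarrow> partial_at (x t) j y (Dx j t y)"
    and "\<And>y i j. y \<in> G \<Longrightarrow> partial_at (Dx j t) i y (Dxx i j t y)"
    and "\<And>i. continuous_on G (Dx i t)"
    and "\<And>i j. continuous_on G (Dxx i j t)"
  using assms unfolding C12_derivs_def by (auto intro: continuous_on_slice)

lemma C12_derivs_diff:
  assumes "C12_derivs G x1 xt1 Dx1 Dxx1" "C12_derivs G x2 xt2 Dx2 Dxx2"
  shows "C12_derivs G (\<lambda>t z. x1 t z - x2 t z) (\<lambda>t z. xt1 t z - xt2 t z)
           (\<lambda>i t z. Dx1 i t z - Dx2 i t z) (\<lambda>i j t z. Dxx1 i j t z - Dxx2 i j t z)"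
proof -
  have cont_diff: "continuous_on S (\<lambda>(t, z). g1 t z - g2 t z)"
    if "continuous_on S (\<lambda>(t, z). g1 t z)" "continuous_on S (\<lambda>(t, z). g2 t z)"
    for S and g1 g2 :: "real \<Rightarrow> 'n::finite pt \<Rightarrow> real"
    using continuous_on_diff[of S "\<lambda>(t, z). g1 t z" "\<lambda>(t, z). g2 t z"] that by (simp add: case_prod_beta)
  show ?thesis
    using assms unfolding C12_derivs_def partial_at_def by (auto intro!: DERIV_diff cont_diff)
qed

lemma C12_derivs_at_max:
  assumes C: "C12_derivs G x xt Dx Dxx" and G: "open G" and t0: "t0 > 0" and z0: "z0 \<in> G"
    and time_max: "\<And>s. 0 < s \<Longrightarrow> s \<le> t0 \<Longrightarrow> exp (- k * s) * x s z0 \<le> exp (- k * t0) * x t0 z0"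
    and space_max: "\<And>y. y \<in> G \<Longrightarrow> x t0 y \<le> x t0 z0"
    and psd: "\<And>\<xi>::real^'n. (\<Sum>i\<in>UNIV. \<Sum>j\<in>UNIV. A i j * \<xi>$i * \<xi>$j) \<ge> 0"
  shows "xt t0 z0 \<ge> k * x t0 z0" and "\<forall>i. Dx i t0 z0 = 0"
    and "(\<Sum>i\<in>UNIV. \<Sum>j\<in>UNIV. A i j * Dxx i j t0 z0) \<le> 0"
proof -
  note C' = C[unfolded C12_derivs_def]
  have "((\<lambda>s. exp (- k * s) * x s z0) has_real_derivative
          exp (- k * t0) * (xt t0 z0 - k * x t0 z0)) (at t0)"
    using C' t0 z0 by (auto intro!: derivative_eq_intros simp: algebra_simps)
  then have "exp (- k * t0) * (xt t0 z0 - k * x t0 z0) \<ge> 0"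
    using left_max_has_real_derivative_nonneg t0 time_max by blast
  then show "xt t0 z0 \<ge> k * x t0 z0" by (simp add: zero_le_mult_iff)
  have "(\<forall>i. Dx i t0 z0 = 0) \<and> (\<Sum>i\<in>UNIV. \<Sum>j\<in>UNIV. A i j * Dxx i j t0 z0) \<le> 0"
    by (rule interior_max_conditions[OF G z0 space_max C12_derivs_slice[OF C t0] psd])
  then show "\<forall>i. Dx i t0 z0 = 0" "(\<Sum>i\<in>UNIV. \<Sum>j\<in>UNIV. A i j * Dxx i j t0 z0) \<le> 0" by auto
qed

lemma classical_solutionE:
  assumes "classical_solution a f G x0 u x"
  obtains xt Dx Dxx where "C12_derivs G x xt Dx Dxx"
    and "\<And>t z. t > 0 \<Longrightarrow> z \<in> G \<Longrightarrow>
           xt t z = (\<Sum>i\<in>UNIV. \<Sum>j\<in>UNIV. a i j z * Dxx i j t z) + f z (x t z) (\<chi> i. Dx i t z)"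
  using assms unfolding classical_solution_def by (auto simp: diff_diff_eq)

lemma classical_solution_data:
  assumes "classical_solution a f G x0 u x"
  shows "continuous_on ({0..} \<times> closure G) (\<lambda>(t, z). x t z)"
    and "\<And>z. z \<in> G \<Longrightarrow> x 0 z = x0 z"
    and "\<And>t z. t \<ge> 0 \<Longrightarrow> z \<in> frontier G \<Longrightarrow> x t z = u t z"
  using assms unfolding classical_solution_def in_CL_def by auto

definition one_sided_Lipschitz :: "'n::finite pt set \<Rightarrow> ('n pt \<Rightarrow> real \<Rightarrow> 'n pt \<Rightarrow> real) \<Rightarrow> bool" where
  "one_sided_Lipschitz G f \<longleftrightarrow>
     (\<forall>W::real set. bounded W \<longrightarrow> (\<exists>k>0. \<forall>w1\<in>W. \<forall>w2\<in>W. w1 > w2 \<longrightarrow>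
        (\<forall>z\<in>G. \<forall>\<xi>. f z w1 \<xi> - f z w2 \<xi> < k * (w1 - w2))))"

lemma H2_one_sided_Lipschitz: "H2 G f \<Longrightarrow> one_sided_Lipschitz G f"
  unfolding H2_def one_sided_Lipschitz_def by blast

lemma solution_difference_no_interior_max:
  assumes G: "open G" and psd: "\<And>\<xi>. (\<Sum>i\<in>UNIV. \<Sum>j\<in>UNIV. a i j z0 * \<xi>$i * \<xi>$j) \<ge> 0"
    and S1: "classical_solution a f G x01 u1 x1" and S2: "classical_solution a f G x02 u2 x2"
    and t0: "t0 > 0" and z0: "z0 \<in> G"
    and time_max: "\<And>s. 0 < s \<Longrightarrow> s \<le> t0 \<Longrightarrow>
      exp (- k * s) * (x1 s z0 - x2 s z0) \<le> exp (- k * t0) * (x1 t0 z0 - x2 t0 z0)"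
    and space_max: "\<And>y. y \<in> G \<Longrightarrow> x1 t0 y - x2 t0 y \<le> x1 t0 z0 - x2 t0 z0"
    and lip: "\<And>\<xi>. f z0 (x1 t0 z0) \<xi> - f z0 (x2 t0 z0) \<xi> < k * (x1 t0 z0 - x2 t0 z0)"
  shows False
proof -
  obtain xt1 Dx1 Dxx1 where C1: "C12_derivs G x1 xt1 Dx1 Dxx1"
    and pde1: "\<And>t z. t > 0 \<Longrightarrow> z \<in> G \<Longrightarrow>
           xt1 t z = (\<Sum>i\<in>UNIV. \<Sum>j\<in>UNIV. a i j z * Dxx1 i j t z) + f z (x1 t z) (\<chi> i. Dx1 i t z)"
    using classical_solutionE[OF S1] by blast
  obtain xt2 Dx2 Dxx2 where C2: "C12_derivs G x2 xt2 Dx2 Dxx2"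
    and pde2: "\<And>t z. t > 0 \<Longrightarrow> z \<in> G \<Longrightarrow>
           xt2 t z = (\<Sum>i\<in>UNIV. \<Sum>j\<in>UNIV. a i j z * Dxx2 i j t z) + f z (x2 t z) (\<chi> i. Dx2 i t z)"
    using classical_solutionE[OF S2] by blast
  note at_max = C12_derivs_at_max[OF C12_derivs_diff[OF C1 C2] G t0 z0 time_max space_max psd]
  let ?\<xi> = "\<chi> i. Dx1 i t0 z0" and ?tr = "\<lambda>D. \<Sum>i\<in>UNIV. \<Sum>j\<in>UNIV. a i j z0 * D i j t0 z0"
  have "?\<xi> = (\<chi> i. Dx2 i t0 z0)" using at_max(2) by (simp add: vec_eq_iff)
  then have "xt1 t0 z0 - xt2 t0 z0 = (?tr Dxx1 - ?tr Dxx2) + (f z0 (x1 t0 z0) ?\<xi> - f z0 (x2 t0 z0) ?\<xi>)"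
    using pde1[OF t0 z0] pde2[OF t0 z0] by simp
  moreover have "?tr Dxx1 - ?tr Dxx2 \<le> 0"
    using at_max(3) by (simp add: sum_subtractf[symmetric] right_diff_distrib)
  ultimately show False using at_max(1) lip[of ?\<xi>] by linarith
qed

text \<open>If the conclusion failed, the maximum of \<open>e\<^sup>-\<^sup>k\<^sup>t (x\<^sub>1 - x\<^sub>2)\<close> over
  \<open>[0,t] \<times> closure G\<close> would be positive; the data exclude the parabolic boundary, and at an
  interior maximum the one-sided Lipschitz bound \<open>k\<close> contradicts the signs obtained above.\<close>
lemma comparison_principle:
  assumes G: "open G" "bounded G"
    and psd: "\<And>z \<xi>. z \<in> G \<Longrightarrow> (\<Sum>i\<in>UNIV. \<Sum>j\<in>UNIV. a i j z * \<xi>$i * \<xi>$j) \<ge> 0"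
    and lip: "one_sided_Lipschitz G f"
    and S1: "classical_solution a f G x01 u1 x1" and S2: "classical_solution a f G x02 u2 x2"
    and init: "\<And>z. z \<in> G \<Longrightarrow> x01 z \<le> x02 z"
    and bdry: "\<And>t z. t \<ge> 0 \<Longrightarrow> z \<in> frontier G \<Longrightarrow> u1 t z \<le> u2 t z"
    and t: "t \<ge> 0" and z: "z \<in> closure G"
  shows "x1 t z \<le> x2 t z"
proof (rule ccontr)
  assume neg: "\<not> x1 t z \<le> x2 t z"
  note cont1 = classical_solution_data(1)[OF S1] and ic1 = classical_solution_data(2)[OF S1]
    and bc1 = classical_solution_data(3)[OF S1]
  note cont2 = classical_solution_data(1)[OF S2] and ic2 = classical_solution_data(2)[OF S2]
    and bc2 = classical_solution_data(3)[OF S2]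
  define K where "K = {0..t} \<times> closure G"
  have K: "compact K" "K \<subseteq> {0..} \<times> closure G" "(t, z) \<in> K"
    using G t z by (auto simp: K_def compact_Times compact_closure)
  then have cK1: "continuous_on K (\<lambda>(t, z). x1 t z)" and cK2: "continuous_on K (\<lambda>(t, z). x2 t z)"
    using continuous_on_subset cont1 cont2 by blast+
  define W where "W = (\<lambda>(t, z). x1 t z) ` K \<union> (\<lambda>(t, z). x2 t z) ` K"
  have "bounded W"
    using compact_continuous_image[OF cK1 K(1)] compact_continuous_image[OF cK2 K(1)]
    unfolding W_def by (auto intro: compact_imp_bounded)
  then obtain k where k: "\<forall>w1\<in>W. \<forall>w2\<in>W. w1 > w2 \<longrightarrow> (\<forall>z\<in>G. \<forall>\<xi>. f z w1 \<xi> - f z w2 \<xi> < k * (w1 - w2))"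
    using lip unfolding one_sided_Lipschitz_def by blast
  define w where "w = (\<lambda>(s, y). exp (- k * s) * (x1 s y - x2 s y))"
  have "continuous_on K (\<lambda>q. exp (- k * fst q) * ((\<lambda>(s, y). x1 s y) q - (\<lambda>(s, y). x2 s y) q))"
    by (intro continuous_intros cK1 cK2)
  then have "continuous_on K w" by (simp add: w_def case_prod_beta)
  then obtain q0 where "q0 \<in> K" "\<And>q. q \<in> K \<Longrightarrow> w q \<le> w q0"
    using continuous_attains_sup[OF K(1)] K(3) by blast
  moreover obtain t0 z0 where "q0 = (t0, z0)" by fastforce
  ultimately have max: "(t0, z0) \<in> K" "\<And>q. q \<in> K \<Longrightarrow> w q \<le> w (t0, z0)" by auto
  have "w (t, z) > 0" using neg by (simp add: w_def)
  then have "w (t0, z0) > 0" using max(2)[OF K(3)] by linarith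
  then have pos: "x1 t0 z0 - x2 t0 z0 > 0" by (simp add: w_def zero_less_mult_iff)
  have t0: "0 \<le> t0" "t0 \<le> t" and z0c: "z0 \<in> closure G" using max(1) by (auto simp: K_def)
  have z0: "z0 \<in> G"
  proof (rule ccontr)
    assume "z0 \<notin> G"
    then have "z0 \<in> frontier G" using z0c G(1) by (simp add: frontier_def interior_open)
    then show False using pos bc1[OF t0(1)] bc2[OF t0(1)] bdry[OF t0(1)] by fastforce
  qed
  have "t0 \<noteq> 0" using pos ic1 ic2 init[OF z0] z0 by auto
  with t0 have t0_pos: "t0 > 0" by simp
  let ?d = "\<lambda>s y. x1 s y - x2 s y"
  have time_max: "exp (- k * s) * ?d s z0 \<le> exp (- k * t0) * ?d t0 z0" if "0 < s" "s \<le> t0" for s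
    using max that t0 z0c by (auto simp: K_def w_def)
  have space_max: "?d t0 y \<le> ?d t0 z0" if "y \<in> G" for y
    using max(2)[of "(t0, y)"] that t0 closure_subset by (auto simp: K_def w_def)
  have "f z0 (x1 t0 z0) \<xi> - f z0 (x2 t0 z0) \<xi> < k * ?d t0 z0" for \<xi>
    using k pos z0 max(1) unfolding W_def by force
  then show False
    using solution_difference_no_interior_max[OF G(1) psd[OF z0] S1 S2 t0_pos z0 time_max space_max]
    by blast
qed

lemma phi_classical_solution:
  assumes G: "open G" "bounded G"
    and psd: "\<And>z \<xi>. z \<in> G \<Longrightarrow> (\<Sum>i\<in>UNIV. \<Sum>j\<in>UNIV. a i j z * \<xi>$i * \<xi>$j) \<ge> 0"
    and lip: "one_sided_Lipschitz G f"
    and S: "classical_solution a f G x0 u x" and t: "t \<ge> 0"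
  shows "phi a f G t x0 u = restrict (x t) (closure G)"
  unfolding phi_def
proof (rule the_equality)
  show "\<exists>y. classical_solution a f G x0 u y \<and> restrict (x t) (closure G) = restrict (y t) (closure G)"
    using S by blast
  fix w assume "\<exists>y. classical_solution a f G x0 u y \<and> w = restrict (y t) (closure G)"
  then obtain y where y: "classical_solution a f G x0 u y" "w = restrict (y t) (closure G)" by blast
  have "y t z = x t z" if "z \<in> closure G" for z
    using comparison_principle[OF G psd lip y(1) S _ _ t that]
      comparison_principle[OF G psd lip S y(1) _ _ t that] by force
  then show "w = restrict (x t) (closure G)" using y(2) by auto
qed

section \<open>\<open>L\<^sup>p\<close> norms\<close>

definition Lq_norm :: "'a::euclidean_space set \<Rightarrow> real \<Rightarrow> ('a \<Rightarrow> real) \<Rightarrow> real" where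
  "Lq_norm G q f = (LINT z:G|lebesgue. \<bar>f z\<bar> powr q) powr (1 / q)"

context
  fixes G :: "'a::euclidean_space set"
  assumes G: "open G" "bounded G"
begin

lemma set_integrable_continuous_on_closure:
  fixes g :: "'a \<Rightarrow> real"
  assumes "continuous_on (closure G) g"
  shows "set_integrable lebesgue G g"
proof -
  have "integrable lborel (\<lambda>x. indicat_real (closure G) x *\<^sub>R g x)"
    by (rule borel_integrable_compact) (use assms G in \<open>auto simp: compact_closure\<close>)
  then have "set_integrable lebesgue (closure G) g"
    unfolding set_integrable_def using integrable_completion borel_measurable_integrable by blast
  then show ?thesis by (rule set_integrable_subset) (use G closure_subset in auto)
qed

lemma set_integrable_abs_powr:
  fixes f :: "'a \<Rightarrow> real"
  assumes "continuous_on (closure G) f" "q > 0"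
  shows "set_integrable lebesgue G (\<lambda>z. \<bar>f z\<bar> powr q)"
  by (rule set_integrable_continuous_on_closure)
    (use assms in \<open>auto intro!: continuous_on_powr'[OF continuous_on_rabs[OF assms(1)] continuous_on_const]\<close>)

lemma Lq_norm_mono:
  assumes f: "continuous_on (closure G) f" and g: "continuous_on (closure G) g"
    and q: "q \<ge> 1" and le: "\<And>z. z \<in> G \<Longrightarrow> \<bar>f z\<bar> \<le> \<bar>g z\<bar>"
  shows "Lq_norm G q f \<le> Lq_norm G q g"
proof -
  have "(LINT z:G|lebesgue. \<bar>f z\<bar> powr q) \<le> (LINT z:G|lebesgue. \<bar>g z\<bar> powr q)"
    using set_integrable_abs_powr[OF f] set_integrable_abs_powr[OF g] q le
    by (intro set_integral_mono powr_mono2) auto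
  moreover have "(LINT z:G|lebesgue. \<bar>f z\<bar> powr q) \<ge> 0"
    by (simp add: set_lebesgue_integral_def)
  ultimately show ?thesis unfolding Lq_norm_def using q by (intro powr_mono2) auto
qed

lemma Lq_norm_const:
  assumes q: "q \<ge> 1"
  shows "Lq_norm G q (\<lambda>z. c) = \<bar>c\<bar> * Lq_norm G q (\<lambda>z. 1)"
proof -
  have "emeasure lebesgue G \<noteq> \<infinity>"
    using emeasure_bounded_finite[OF G(2)] G(1) by (simp add: emeasure_completion)
  then have "Lq_norm G q (\<lambda>z. c) = (measure lebesgue G * \<bar>c\<bar> powr q) powr (1/q)"
    and "Lq_norm G q (\<lambda>z. 1) = measure lebesgue G powr (1/q)"
    unfolding Lq_norm_def using G by (simp_all add: set_integral_const)
  then show ?thesis using q by (simp add: powr_mult powr_powr)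
qed

end

lemma powr_convex_combination_le:
  fixes a b l q :: real
  assumes "0 \<le> a" "0 \<le> b" "0 \<le> l" "l \<le> 1" "1 \<le> q"
  shows "(l * a + (1 - l) * b) powr q \<le> l * a powr q + (1 - l) * b powr q"
proof -
  have scale: "(c * x) powr q \<le> c * x powr q" if "0 \<le> c" "c \<le> 1" "0 \<le> x" for c x
  proof -
    have "c powr q \<le> c powr 1" by (rule powr_mono') (use that assms in auto)
    then show ?thesis
      using that by (cases "c = 0") (auto simp: powr_mult intro: mult_right_mono)
  qed
  consider "a = 0" | "b = 0" | "a > 0" "b > 0" using assms by linarith
  then show ?thesis
  proof cases
    case 3
    then show ?thesis
      using convex_onD[OF powr_convex[OF assms(5)], of "1 - l" a b] assms by simp
  qed (use scale[of "1 - l" b] scale[of l a] assms in simp_all)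
qed

lemma abs_add_powr_le_weighted:
  fixes a b \<alpha> \<beta> q :: real
  assumes "\<alpha> > 0" "\<beta> > 0" "q \<ge> 1"
  shows "\<bar>a + b\<bar> powr q \<le>
    (\<alpha> + \<beta>) powr q * (\<alpha> / (\<alpha> + \<beta>) * (\<bar>a\<bar> / \<alpha>) powr q + \<beta> / (\<alpha> + \<beta>) * (\<bar>b\<bar> / \<beta>) powr q)"
proof -
  define l where "l = \<alpha> / (\<alpha> + \<beta>)"
  have l: "0 \<le> l" "l \<le> 1" "1 - l = \<beta> / (\<alpha> + \<beta>)" using assms by (auto simp: l_def field_simps)
  have "\<bar>a + b\<bar> powr q \<le> (\<bar>a\<bar> + \<bar>b\<bar>) powr q" using assms by (intro powr_mono2) auto
  also have "\<bar>a\<bar> + \<bar>b\<bar> = (\<alpha> + \<beta>) * (l * (\<bar>a\<bar> / \<alpha>) + (1 - l) * (\<bar>b\<bar> / \<beta>))"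
  proof -
    have "(\<alpha> + \<beta>) * (l * (\<bar>a\<bar> / \<alpha>)) = \<bar>a\<bar>" using assms by (simp add: l_def)
    moreover have "(\<alpha> + \<beta>) * ((1 - l) * (\<bar>b\<bar> / \<beta>)) = \<bar>b\<bar>" using assms unfolding l(3) by simp
    ultimately show ?thesis by (simp add: distrib_left)
  qed
  also have "((\<alpha> + \<beta>) * (l * (\<bar>a\<bar> / \<alpha>) + (1 - l) * (\<bar>b\<bar> / \<beta>))) powr q
      = (\<alpha> + \<beta>) powr q * (l * (\<bar>a\<bar> / \<alpha>) + (1 - l) * (\<bar>b\<bar> / \<beta>)) powr q"
    using assms l by (simp add: powr_mult)
  also have "\<dots> \<le> (\<alpha> + \<beta>) powr q * (l * (\<bar>a\<bar> / \<alpha>) powr q + (1 - l) * (\<bar>b\<bar> / \<beta>) powr q)"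
    using assms l by (intro mult_left_mono powr_convex_combination_le) auto
  finally show ?thesis unfolding l(3) by (simp add: l_def)
qed

text \<open>Minkowski's inequality, by integrating the weighted convexity bound with weights
  slightly above the two norms.\<close>
lemma Lq_norm_triangle:
  fixes G :: "'a::euclidean_space set"
  assumes G: "open G" "bounded G" and f: "continuous_on (closure G) f"
    and g: "continuous_on (closure G) g" and q: "q \<ge> 1"
  shows "Lq_norm G q (\<lambda>z. f z + g z) \<le> Lq_norm G q f + Lq_norm G q g"
proof (rule field_le_epsilon)
  fix e :: real assume e: "e > 0"
  let ?I = "\<lambda>h. LINT z:G|lebesgue. \<bar>h z\<bar> powr q"
  have I_nonneg: "?I h \<ge> 0" for h by (simp add: set_lebesgue_integral_def)
  define \<alpha> where "\<alpha> = Lq_norm G q f + e / 2"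
  define \<beta> where "\<beta> = Lq_norm G q g + e / 2"
  have pos: "\<alpha> > 0" "\<beta> > 0" using e by (auto simp: \<alpha>_def \<beta>_def Lq_norm_def intro!: add_nonneg_pos)
  have I_le: "?I h \<le> \<gamma> powr q" if "Lq_norm G q h < \<gamma>" for h \<gamma>
  proof -
    have "?I h = Lq_norm G q h powr q" using q I_nonneg[of h] by (simp add: Lq_norm_def powr_powr)
    also have "\<dots> \<le> \<gamma> powr q" using that q by (intro powr_mono2) (auto simp: Lq_norm_def)
    finally show ?thesis .
  qed
  have If: "?I f \<le> \<alpha> powr q" and Ig: "?I g \<le> \<beta> powr q" using e by (auto simp: \<alpha>_def \<beta>_def intro!: I_le)
  have intf: "set_integrable lebesgue G (\<lambda>z. \<bar>f z\<bar> powr q)"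
    and intg: "set_integrable lebesgue G (\<lambda>z. \<bar>g z\<bar> powr q)"
    and intfg: "set_integrable lebesgue G (\<lambda>z. \<bar>f z + g z\<bar> powr q)"
    using f g q by (auto intro!: set_integrable_abs_powr[OF G] continuous_intros)
  define c1 where "c1 = (\<alpha> + \<beta>) powr q * (\<alpha> / (\<alpha> + \<beta>)) / \<alpha> powr q"
  define c2 where "c2 = (\<alpha> + \<beta>) powr q * (\<beta> / (\<alpha> + \<beta>)) / \<beta> powr q"
  have "?I (\<lambda>z. f z + g z) \<le> (LINT z:G|lebesgue. c1 * \<bar>f z\<bar> powr q + c2 * \<bar>g z\<bar> powr q)"
    using intfg intf intg abs_add_powr_le_weighted[OF pos q]
    by (intro set_integral_mono) (auto simp: c1_def c2_def powr_divide field_simps)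
  also have "\<dots> = c1 * ?I f + c2 * ?I g"
    using intf intg by (simp add: set_integral_add set_integrable_mult_right set_integral_mult_right)
  also have "\<dots> \<le> c1 * \<alpha> powr q + c2 * \<beta> powr q"
    using If Ig pos by (intro add_mono mult_left_mono) (auto simp: c1_def c2_def)
  also have "\<dots> = (\<alpha> + \<beta>) powr q"
  proof -
    have "c1 * \<alpha> powr q + c2 * \<beta> powr q
        = (\<alpha> + \<beta>) powr q * \<alpha> / (\<alpha> + \<beta>) + (\<alpha> + \<beta>) powr q * \<beta> / (\<alpha> + \<beta>)"
      using pos by (simp add: c1_def c2_def)
    also have "\<dots> = (\<alpha> + \<beta>) powr q * ((\<alpha> + \<beta>) / (\<alpha> + \<beta>))"
      by (simp only: times_divide_eq_right distrib_left add_divide_distrib)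
    finally show ?thesis using pos by simp
  qed
  finally have "?I (\<lambda>z. f z + g z) powr (1/q) \<le> ((\<alpha> + \<beta>) powr q) powr (1/q)"
    using I_nonneg q by (intro powr_mono2) auto
  then show "Lq_norm G q (\<lambda>z. f z + g z) \<le> Lq_norm G q f + Lq_norm G q g + e"
    using pos q by (simp add: Lq_norm_def powr_powr \<alpha>_def \<beta>_def)
qed

lemma bdd_above_abs_on_closure:
  fixes G :: "'a::euclidean_space set" and f :: "'a \<Rightarrow> real"
  assumes "bounded G" "continuous_on (closure G) f"
  shows "bdd_above ((\<lambda>z. \<bar>f z\<bar>) ` G)"
proof -
  have "compact ((\<lambda>z. \<bar>f z\<bar>) ` closure G)"
    using assms by (intro compact_continuous_image continuous_intros) (auto simp: compact_closure)
  then have "bounded ((\<lambda>z. \<bar>f z\<bar>) ` G)"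
    by (rule bounded_subset[OF compact_imp_bounded]) (use closure_subset in auto)
  then show ?thesis by (rule bounded_imp_bdd_above)
qed

lemma pnorm_finite:
  assumes "p \<noteq> \<infinity>"
  shows "pnorm G p f = Lq_norm G (real_of_ereal p) f"
  using assms by (simp add: pnorm_def Lq_norm_def)

lemma pnorm_infinity: "pnorm G \<infinity> f = (SUP z\<in>G. \<bar>f z\<bar>)"
  by (simp add: pnorm_def)

context
  fixes G :: "'n::finite pt set" and p :: ereal
  assumes G: "open G" "bounded G" "G \<noteq> {}" and p: "1 \<le> p"
begin

lemma exponent_ge_1: "p \<noteq> \<infinity> \<Longrightarrow> real_of_ereal p \<ge> 1"
  using p by (cases p) auto

lemma pnorm_nonneg:
  assumes f: "continuous_on (closure G) f"
  shows "pnorm G p f \<ge> 0"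
proof (cases "p = \<infinity>")
  case True
  obtain z where z: "z \<in> G" using G by auto
  have "0 \<le> \<bar>f z\<bar>" by simp
  also have "\<dots> \<le> (SUP z\<in>G. \<bar>f z\<bar>)" by (rule cSUP_upper[OF z bdd_above_abs_on_closure[OF G(2) f]])
  finally show ?thesis using True by (simp add: pnorm_infinity)
qed (simp add: pnorm_finite Lq_norm_def)

lemma pnorm_mono:
  assumes f: "continuous_on (closure G) f" and g: "continuous_on (closure G) g"
    and le: "\<And>z. z \<in> G \<Longrightarrow> \<bar>f z\<bar> \<le> \<bar>g z\<bar>"
  shows "pnorm G p f \<le> pnorm G p g"
proof (cases "p = \<infinity>")
  case True
  have "(SUP z\<in>G. \<bar>f z\<bar>) \<le> (SUP z\<in>G. \<bar>g z\<bar>)"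
    by (rule cSUP_mono[OF G(3) bdd_above_abs_on_closure[OF G(2) g]]) (use le in auto)
  then show ?thesis using True by (simp add: pnorm_infinity)
next
  case False
  then show ?thesis
    unfolding pnorm_finite[OF False] by (rule Lq_norm_mono[OF G(1,2) f g exponent_ge_1 le])
qed

lemma pnorm_triangle:
  assumes f: "continuous_on (closure G) f" and g: "continuous_on (closure G) g"
  shows "pnorm G p (\<lambda>z. f z + g z) \<le> pnorm G p f + pnorm G p g"
proof (cases "p = \<infinity>")
  case True
  have "(SUP z\<in>G. \<bar>f z + g z\<bar>) \<le> (SUP z\<in>G. \<bar>f z\<bar>) + (SUP z\<in>G. \<bar>g z\<bar>)"
  proof (rule cSUP_least[OF G(3)])
    fix z assume z: "z \<in> G"
    have "\<bar>f z + g z\<bar> \<le> \<bar>f z\<bar> + \<bar>g z\<bar>" by (rule abs_triangle_ineq)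
    also have "\<dots> \<le> (SUP z\<in>G. \<bar>f z\<bar>) + (SUP z\<in>G. \<bar>g z\<bar>)"
      by (intro add_mono cSUP_upper[OF z] bdd_above_abs_on_closure[OF G(2)] f g)
    finally show "\<bar>f z + g z\<bar> \<le> (SUP z\<in>G. \<bar>f z\<bar>) + (SUP z\<in>G. \<bar>g z\<bar>)" .
  qed
  then show ?thesis using True by (simp add: pnorm_infinity)
next
  case False
  then show ?thesis
    unfolding pnorm_finite[OF False] by (rule Lq_norm_triangle[OF G(1,2) f g exponent_ge_1])
qed

lemma pnorm_const: "pnorm G p (\<lambda>z. c) = \<bar>c\<bar> * pnorm G p (\<lambda>z. 1)"
proof (cases "p = \<infinity>")
  case False
  then show ?thesis unfolding pnorm_finite[OF False] by (rule Lq_norm_const[OF G(1,2) exponent_ge_1])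
qed (use G(3) in \<open>simp add: pnorm_infinity\<close>)

lemma pnorm_abs: "pnorm G p (\<lambda>z. \<bar>f z\<bar>) = pnorm G p f"
  by (simp add: pnorm_def)

lemma pnorm_cong:
  assumes eq: "\<And>z. z \<in> G \<Longrightarrow> f z = g z"
  shows "pnorm G p f = pnorm G p g"
proof -
  have "(LINT z:G|lebesgue. \<bar>f z\<bar> powr r) = (LINT z:G|lebesgue. \<bar>g z\<bar> powr r)" for r
    by (rule set_lebesgue_integral_cong) (use eq G in auto)
  then show ?thesis using eq unfolding pnorm_def by (simp cong: SUP_cong)
qed

lemma pnorm_add_const_le:
  assumes "continuous_on (closure G) g"
  shows "pnorm G p (\<lambda>z. g z + c) \<le> pnorm G p g + \<bar>c\<bar> * pnorm G p (\<lambda>z. 1)"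
  using pnorm_triangle[OF assms continuous_on_const, of c] pnorm_const[of c] by simp

lemma pnorm_diff_const_le:
  assumes "continuous_on (closure G) g"
  shows "pnorm G p (\<lambda>z. g z - c) \<le> pnorm G p g + \<bar>c\<bar> * pnorm G p (\<lambda>z. 1)"
  using pnorm_add_const_le[OF assms, of "- c"] by simp

end

section \<open>Inputs and gains\<close>

lemma constant_in_Ucal: "(\<lambda>s z. k) \<in> Ucal G"
  unfolding Ucal_def by (auto intro: exI[of _ "\<bar>k\<bar>"])

lemma Unorm_constant:
  assumes "frontier G \<noteq> {}"
  shows "Unorm G (\<lambda>s z. k) = \<bar>k\<bar>"
  using assms unfolding Unorm_def by simp

lemma abs_le_Unorm:
  assumes u: "u \<in> Ucal G" and s: "s \<ge> 0" and z: "z \<in> frontier G"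
  shows "\<bar>u s z\<bar> \<le> Unorm G u"
proof -
  obtain B where "\<forall>t\<ge>0. \<forall>z\<in>frontier G. \<bar>u t z\<bar> \<le> B" using u unfolding Ucal_def by blast
  then have "bdd_above ((\<lambda>q. \<bar>u (fst q) (snd q)\<bar>) ` ({0..} \<times> frontier G))"
    by (auto intro!: bdd_aboveI[of _ B])
  from cSUP_upper[OF _ this, of "(s, z)"] show ?thesis using s z unfolding Unorm_def by simp
qed

lemma Kinf_nonneg: "Kinf \<gamma> \<Longrightarrow> r \<ge> 0 \<Longrightarrow> \<gamma> r \<ge> 0"
  unfolding Kinf_def strict_mono_on_def by (metis atLeast_iff less_eq_real_def order_refl)

lemma Kinf_linear_combination:
  assumes K: "Kinf \<gamma>" and b: "b \<ge> 1" and C: "C \<ge> 0"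
  shows "Kinf (\<lambda>r. b * \<gamma> r + C * r)"
  unfolding Kinf_def
proof (intro conjI allI)
  show "continuous_on {0..} (\<lambda>r. b * \<gamma> r + C * r)"
    using K unfolding Kinf_def by (intro continuous_intros) auto
  show "strict_mono_on {0..} (\<lambda>r. b * \<gamma> r + C * r)"
  proof (rule strict_mono_onI)
    fix r s :: real assume "r \<in> {0..}" "s \<in> {0..}" "r < s"
    then have "b * \<gamma> r < b * \<gamma> s" using K b unfolding Kinf_def strict_mono_on_def by simp
    moreover have "C * r \<le> C * s" using C \<open>r < s\<close> by (intro mult_left_mono) auto
    ultimately show "b * \<gamma> r + C * r < b * \<gamma> s + C * s" by simp
  qed
  show "b * \<gamma> 0 + C * 0 = 0" using K unfolding Kinf_def by simp
  fix B
  obtain r where r: "r \<ge> 0" "\<gamma> r > B" using K unfolding Kinf_def by blast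
  have "\<gamma> r \<le> b * \<gamma> r" using Kinf_nonneg[OF K r(1)] b by (simp add: mult_le_cancel_right1)
  moreover have "0 \<le> C * r" using C r(1) by simp
  ultimately show "\<exists>r\<ge>0. B < b * \<gamma> r + C * r" using r by (intro exI[of _ r]) linarith
qed

lemma le_of_le_right_shifts:
  fixes g :: "real \<Rightarrow> real"
  assumes cont: "continuous_on {0..} g" and m: "m \<ge> 0" and le: "\<And>e. e > 0 \<Longrightarrow> L \<le> g (m + e)"
  shows "L \<le> g m"
proof (rule ccontr)
  assume "\<not> L \<le> g m"
  then have e: "L - g m > 0" by simp
  have "continuous (at m within {0..}) g" using cont m continuous_on_eq_continuous_within by auto
  then obtain d where d: "d > 0" "\<And>y. y \<in> {0..} \<Longrightarrow> dist y m < d \<Longrightarrow> dist (g y) (g m) < L - g m"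
    using e unfolding continuous_within_eps_delta by blast
  have "dist (g (m + d / 2)) (g m) < L - g m" using d m by (intro d(2)) (auto simp: dist_real_def)
  moreover have "L \<le> g (m + d / 2)" using le d by simp
  ultimately show False by (simp add: dist_real_def abs_less_iff)
qed

section \<open>Exponential input-to-state stability\<close>

definition exp_ISS_estimate ::
  "('n \<Rightarrow> 'n \<Rightarrow> 'n::finite pt \<Rightarrow> real) \<Rightarrow> ('n pt \<Rightarrow> real \<Rightarrow> 'n pt \<Rightarrow> real) \<Rightarrow> 'n pt set
   \<Rightarrow> ('n pt \<Rightarrow> real) set \<Rightarrow> (('n pt \<Rightarrow> real) \<Rightarrow> (real \<Rightarrow> 'n pt \<Rightarrow> real) set) \<Rightarrow> ereal
   \<Rightarrow> real \<Rightarrow> real \<Rightarrow> (real \<Rightarrow> real) \<Rightarrow> bool" where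
  "exp_ISS_estimate a f G X Uset p M c \<gamma> \<longleftrightarrow>
     (\<forall>t\<ge>0. \<forall>x\<in>X. \<forall>u\<in>Uset x.
        pnorm G p (phi a f G t x u) \<le> M * exp (- c * t) * pnorm G p x + \<gamma> (Unorm G u))"

definition exp_ISS_estimate_constant_inputs ::
  "('n \<Rightarrow> 'n \<Rightarrow> 'n::finite pt \<Rightarrow> real) \<Rightarrow> ('n pt \<Rightarrow> real \<Rightarrow> 'n pt \<Rightarrow> real) \<Rightarrow> 'n pt set
   \<Rightarrow> ('n pt \<Rightarrow> real) set \<Rightarrow> (('n pt \<Rightarrow> real) \<Rightarrow> (real \<Rightarrow> 'n pt \<Rightarrow> real) set) \<Rightarrow> ereal
   \<Rightarrow> real \<Rightarrow> real \<Rightarrow> (real \<Rightarrow> real) \<Rightarrow> bool" where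
  "exp_ISS_estimate_constant_inputs a f G X Uset p M c \<gamma> \<longleftrightarrow>
     (\<forall>t\<ge>0. \<forall>x\<in>X. \<forall>u\<in>Uset x. (\<forall>s\<ge>0. \<forall>z\<in>frontier G. u s z = u 0 z) \<longrightarrow>
        pnorm G p (phi a f G t x u) \<le> M * exp (- c * t) * pnorm G p x + \<gamma> (Unorm G u))"

definition exp_ISS_estimate_Q ::
  "('n \<Rightarrow> 'n \<Rightarrow> 'n::finite pt \<Rightarrow> real) \<Rightarrow> ('n pt \<Rightarrow> real \<Rightarrow> 'n pt \<Rightarrow> real) \<Rightarrow> 'n pt set
   \<Rightarrow> ('n pt \<Rightarrow> real) set \<Rightarrow> ereal \<Rightarrow> real \<Rightarrow> real \<Rightarrow> (real \<Rightarrow> real) \<Rightarrow> bool" where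
  "exp_ISS_estimate_Q a f G X p M c \<gamma> \<longleftrightarrow>
     (\<forall>t\<ge>0. \<forall>y\<in>{y\<in>X. \<forall>z\<in>frontier G. y z = 0}. \<forall>k::real.
        pnorm G p (phiY a f G t y (\<lambda>s z. k)) \<le> M * exp (- c * t) * pnorm G p y + \<gamma> \<bar>k\<bar>)"

lemma exp_ISS_constant_inputs_if_exp_ISS:
  "(\<exists>M c \<gamma>. M > 0 \<and> c > 0 \<and> Kinf \<gamma> \<and> exp_ISS_estimate a f G X Uset p M c \<gamma>) \<Longrightarrow>
   (\<exists>M c \<gamma>. M > 0 \<and> c > 0 \<and> Kinf \<gamma> \<and> exp_ISS_estimate_constant_inputs a f G X Uset p M c \<gamma>)"
  unfolding exp_ISS_estimate_def exp_ISS_estimate_constant_inputs_def by blast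

lemma infdist_less_imp_dist_less:
  assumes "A \<noteq> {}" "infdist z A < \<delta>"
  obtains s where "s \<in> A" "dist z s < \<delta>"
  using assms unfolding infdist_notempty[OF assms(1)] by (auto simp: cINF_less_iff intro: bdd_belowI[of _ 0])

locale parabolic_ISS_setting =
  fixes G :: "'n::finite pt set" and a :: "'n \<Rightarrow> 'n \<Rightarrow> 'n pt \<Rightarrow> real"
    and f :: "'n pt \<Rightarrow> real \<Rightarrow> 'n pt \<Rightarrow> real" and X :: "('n pt \<Rightarrow> real) set"
    and Uset :: "('n pt \<Rightarrow> real) \<Rightarrow> (real \<Rightarrow> 'n pt \<Rightarrow> real) set" and p :: ereal
  assumes open_G: "open G" and bounded_G: "bounded G" and G_nonempty: "G \<noteq> {}"
    and psd: "\<And>z \<xi>. z \<in> G \<Longrightarrow> (\<Sum>i\<in>UNIV. \<Sum>j\<in>UNIV. a i j z * \<xi>$i * \<xi>$j) \<ge> 0"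
    and lip: "one_sided_Lipschitz G f"
    and H1: "H1 a f G X Uset" and H3: "H3 G X" and p: "1 \<le> p"
begin

abbreviation one_pnorm :: real where "one_pnorm \<equiv> pnorm G p (\<lambda>z. 1)"

lemma frontier_nonempty: "frontier G \<noteq> {}"
  using frontier_not_empty G_nonempty bounded_G not_bounded_UNIV by blast

lemma one_pnorm_nonneg: "one_pnorm \<ge> 0"
  by (rule pnorm_nonneg[OF open_G bounded_G G_nonempty p]) simp

lemmas pnorm_cong' = pnorm_cong[OF open_G bounded_G G_nonempty p]
  and pnorm_mono' = pnorm_mono[OF open_G bounded_G G_nonempty p]
  and pnorm_triangle' = pnorm_triangle[OF open_G bounded_G G_nonempty p]
  and pnorm_abs' = pnorm_abs[OF open_G bounded_G G_nonempty p]
  and pnorm_add_const_le' = pnorm_add_const_le[OF open_G bounded_G G_nonempty p]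
  and pnorm_diff_const_le' = pnorm_diff_const_le[OF open_G bounded_G G_nonempty p]

lemma X_continuous: "x \<in> X \<Longrightarrow> continuous_on (closure G) x"
  using H1[unfolded H1_def, THEN conjunct1] by blast

lemma X_add: "x \<in> X \<Longrightarrow> y \<in> X \<Longrightarrow> (\<lambda>z. x z + y z) \<in> X"
  using H1[unfolded H1_def, THEN conjunct2, THEN conjunct1] by blast

lemma X_scale: "x \<in> X \<Longrightarrow> (\<lambda>z. c * x z) \<in> X"
  using H1[unfolded H1_def, THEN conjunct2, THEN conjunct2, THEN conjunct1] by blast

lemma X_const: "(\<lambda>z. c) \<in> X"
  using H1[unfolded H1_def, THEN conjunct2, THEN conjunct2, THEN conjunct2, THEN conjunct1] by blast

lemma X_add_const: "x \<in> X \<Longrightarrow> (\<lambda>z. x z + c) \<in> X"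
  using X_add[OF _ X_const] .

lemma Uset_properties:
  assumes "x0 \<in> X"
  shows "Uset x0 \<subseteq> {v \<in> Ucal G. \<forall>z\<in>frontier G. v 0 z = x0 z}"
    and "\<forall>v\<in>Ucal G. (\<forall>t\<ge>0. \<forall>z\<in>frontier G. v t z = x0 z) \<longrightarrow> v \<in> Uset x0"
    and "\<forall>u\<in>Uset x0. \<exists>x. classical_solution a f G x0 u x \<and> (\<forall>t\<ge>0. x t \<in> X)"
  using bspec[OF H1[unfolded H1_def, THEN conjunct2, THEN conjunct2, THEN conjunct2, THEN conjunct2] assms]
  by auto

lemma Uset_subset: "x0 \<in> X \<Longrightarrow> u \<in> Uset x0 \<Longrightarrow> u \<in> Ucal G \<and> (\<forall>z\<in>frontier G. u 0 z = x0 z)"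
  using Uset_properties(1) by blast

lemma constant_input_in_Uset:
  "x0 \<in> X \<Longrightarrow> (\<forall>z\<in>frontier G. x0 z = k) \<Longrightarrow> (\<lambda>s z. k) \<in> Uset x0"
  using Uset_properties(2) constant_in_Ucal by fastforce

lemma solution_exists:
  "x0 \<in> X \<Longrightarrow> u \<in> Uset x0 \<Longrightarrow> \<exists>x. classical_solution a f G x0 u x \<and> (\<forall>t\<ge>0. x t \<in> X)"
  using Uset_properties(3) by blast

lemma pnorm_phi:
  assumes "classical_solution a f G x0 u x" "t \<ge> 0"
  shows "pnorm G p (phi a f G t x0 u) = pnorm G p (x t)"
  using phi_classical_solution[OF open_G bounded_G psd lip assms] closure_subset
  by (intro pnorm_cong') auto

lemma phiY_solution:
  assumes "classical_solution a f G x0 (\<lambda>s z. k) x" "t \<ge> 0" "z \<in> closure G"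
  shows "phiY a f G t (\<lambda>z. x0 z - k) (\<lambda>s z. k) z = x t z - k"
  using phi_classical_solution[OF open_G bounded_G psd lip assms(1,2)] assms(3)
  by (simp add: phiY_def)

lemma exp_ISS_estimate_Q_if_constant_inputs:
  assumes est: "exp_ISS_estimate_constant_inputs a f G X Uset p M c \<gamma>" and M: "M \<ge> 0" and c: "c \<ge> 0"
  shows "exp_ISS_estimate_Q a f G X p M c (\<lambda>r. \<gamma> r + (M + 1) * one_pnorm * r)"
  unfolding exp_ISS_estimate_Q_def
proof (intro allI impI ballI)
  fix t :: real and y k assume t: "t \<ge> 0" and "y \<in> {y \<in> X. \<forall>z\<in>frontier G. y z = 0}"
  then have y: "y \<in> X" "\<And>z. z \<in> frontier G \<Longrightarrow> y z = 0" by auto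
  define x0 where "x0 = (\<lambda>z. y z + k)"
  have x0: "x0 \<in> X" and u: "(\<lambda>s z. k) \<in> Uset x0"
    using y X_add_const constant_input_in_Uset by (auto simp: x0_def)
  obtain x where sol: "classical_solution a f G x0 (\<lambda>s z. k) x" and xX: "\<forall>t\<ge>0. x t \<in> X"
    using solution_exists[OF x0 u] by blast
  define E where "E = exp (- c * t)"
  have E: "0 < E" "E \<le> 1" using c t by (auto simp: E_def mult_nonneg_nonneg)
  have xt: "continuous_on (closure G) (x t)" using X_continuous xX t by blast
  have "phiY a f G t y (\<lambda>s z. k) z = x t z - k" if "z \<in> G" for z
    using phiY_solution[OF sol t subsetD[OF closure_subset that]] by (simp add: x0_def)
  then have "pnorm G p (phiY a f G t y (\<lambda>s z. k)) = pnorm G p (\<lambda>z. x t z - k)"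
    by (rule pnorm_cong')
  moreover have "pnorm G p (\<lambda>z. x t z - k) \<le> pnorm G p (x t) + \<bar>k\<bar> * one_pnorm"
    by (rule pnorm_diff_const_le'[OF xt])
  moreover have "pnorm G p (x t) \<le> M * E * pnorm G p x0 + \<gamma> \<bar>k\<bar>"
    using est[unfolded exp_ISS_estimate_constant_inputs_def, rule_format, OF t x0 u]
    unfolding pnorm_phi[OF sol t] Unorm_constant[OF frontier_nonempty] E_def by simp
  moreover have "M * E * pnorm G p x0 \<le> M * E * pnorm G p y + M * E * (\<bar>k\<bar> * one_pnorm)"
  proof -
    have "pnorm G p x0 \<le> pnorm G p y + \<bar>k\<bar> * one_pnorm"
      unfolding x0_def by (rule pnorm_add_const_le'[OF X_continuous[OF y(1)]])
    then have "M * E * pnorm G p x0 \<le> M * E * (pnorm G p y + \<bar>k\<bar> * one_pnorm)"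
      using M E by (intro mult_left_mono) auto
    then show ?thesis by (simp only: distrib_left)
  qed
  moreover have "M * E * (\<bar>k\<bar> * one_pnorm) \<le> M * (\<bar>k\<bar> * one_pnorm)"
    using mult_left_le[OF E(2) M] one_pnorm_nonneg by (intro mult_right_mono) auto
  moreover have "(M + 1) * one_pnorm * \<bar>k\<bar> = M * (\<bar>k\<bar> * one_pnorm) + \<bar>k\<bar> * one_pnorm"
    by (simp add: algebra_simps)
  ultimately show "pnorm G p (phiY a f G t y (\<lambda>s z. k))
      \<le> M * exp (- c * t) * pnorm G p y + (\<gamma> \<bar>k\<bar> + (M + 1) * one_pnorm * \<bar>k\<bar>)"
    unfolding E_def[symmetric] by linarith
qed

lemma upper_barrier:
  assumes x0: "x0 \<in> X" and bd: "\<And>z. z \<in> frontier G \<Longrightarrow> \<bar>x0 z\<bar> \<le> m" and C: "m < C"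
  obtains xb where "xb \<in> X" "\<And>z. z \<in> G \<Longrightarrow> x0 z \<le> xb z" "\<And>z. z \<in> frontier G \<Longrightarrow> xb z = C"
    "\<And>z. z \<in> G \<Longrightarrow> \<bar>xb z - C\<bar> \<le> \<bar>x0 z\<bar> + C"
proof -
  have "uniformly_continuous_on (closure G) x0"
    using X_continuous[OF x0] bounded_G by (intro compact_uniformly_continuous) (auto simp: compact_closure)
  then obtain \<delta> where \<delta>: "\<delta> > 0"
    "\<And>z z'. z \<in> closure G \<Longrightarrow> z' \<in> closure G \<Longrightarrow> dist z' z < \<delta> \<Longrightarrow> dist (x0 z') (x0 z) < C - m"
    using C unfolding uniformly_continuous_on_def by (metis diff_gt_0_iff_gt)
  have near: "\<bar>x0 z\<bar> < C" if z: "z \<in> G" "infdist z (frontier G) < \<delta>" for z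
  proof -
    obtain s where s: "s \<in> frontier G" "dist z s < \<delta>"
      using infdist_less_imp_dist_less[OF frontier_nonempty z(2)] .
    have "dist (x0 z) (x0 s) < C - m"
      using \<delta>(2)[of s z] s z(1) closure_subset by (auto simp: dist_commute frontier_closures)
    then show ?thesis using bd[OF s(1)] by (simp add: dist_real_def)
  qed
  obtain k where k: "\<And>z. z \<in> closure G \<Longrightarrow> 0 \<le> k z \<and> k z \<le> 1"
    "\<And>z. z \<in> frontier G \<Longrightarrow> k z = 1" "\<And>z. z \<in> G \<Longrightarrow> infdist z (frontier G) \<ge> \<delta> \<Longrightarrow> k z = 0"
    "(\<lambda>z. (1 - k z) * x0 z + C * k z) \<in> X"
    using H3[unfolded H3_def, rule_format, OF \<delta>(1) x0, where a = C] by blast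
  have C_pos: "C > 0"
    using bd C frontier_nonempty by (metis abs_ge_zero all_not_in_conv order.strict_trans1)
  show ?thesis
  proof (rule that[OF k(4)])
    fix z assume z: "z \<in> G"
    then have k01: "0 \<le> k z" "k z \<le> 1" using k(1) closure_subset by auto
    have "(1 - k z) * x0 z + C * k z - C = (1 - k z) * (x0 z - C)" by (simp add: algebra_simps)
    then have "\<bar>(1 - k z) * x0 z + C * k z - C\<bar> = (1 - k z) * \<bar>x0 z - C\<bar>"
      using k01 by (simp add: abs_mult)
    also have "\<dots> \<le> \<bar>x0 z - C\<bar>" using k01 by (simp add: mult_left_le_one_le)
    also have "\<dots> \<le> \<bar>x0 z\<bar> + C" using C_pos by linarith
    finally show "\<bar>(1 - k z) * x0 z + C * k z - C\<bar> \<le> \<bar>x0 z\<bar> + C" .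
    show "x0 z \<le> (1 - k z) * x0 z + C * k z"
    proof (cases "infdist z (frontier G) < \<delta>")
      case True
      then have "k z * (C - x0 z) \<ge> 0" using near[OF z] k01 by simp
      then show ?thesis by (simp add: algebra_simps)
    qed (use k(3)[OF z] in simp)
  qed (use k(2) in simp)
qed

lemma barrier_estimate:
  assumes est: "exp_ISS_estimate_Q a f G X p M c \<gamma>" and M: "M \<ge> 0" and t: "t \<ge> 0"
    and x0: "x0 \<in> X" and xb0: "xb0 \<in> X" "\<And>z. z \<in> frontier G \<Longrightarrow> xb0 z = k"
    and close: "\<And>z. z \<in> G \<Longrightarrow> \<bar>xb0 z - k\<bar> \<le> \<bar>x0 z\<bar> + \<bar>k\<bar>"
    and sol: "classical_solution a f G xb0 (\<lambda>s z. k) xb"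
  shows "pnorm G p (\<lambda>z. xb t z - k) \<le> M * exp (- c * t) * (pnorm G p x0 + \<bar>k\<bar> * one_pnorm) + \<gamma> \<bar>k\<bar>"
proof -
  define y where "y = (\<lambda>z. xb0 z - k)"
  have yX: "y \<in> X" using X_add_const[OF xb0(1), of "- k"] by (simp add: y_def)
  then have y: "y \<in> {y \<in> X. \<forall>z\<in>frontier G. y z = 0}" using xb0(2) by (simp add: y_def)
  have "pnorm G p (\<lambda>z. xb t z - k) = pnorm G p (phiY a f G t y (\<lambda>s z. k))"
    by (intro pnorm_cong') (simp add: y_def phiY_solution[OF sol t] subsetD[OF closure_subset])
  also have "\<dots> \<le> M * exp (- c * t) * pnorm G p y + \<gamma> \<bar>k\<bar>"
    using est t y unfolding exp_ISS_estimate_Q_def by blast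
  finally have xb: "pnorm G p (\<lambda>z. xb t z - k) \<le> M * exp (- c * t) * pnorm G p y + \<gamma> \<bar>k\<bar>" .
  have "pnorm G p y \<le> pnorm G p (\<lambda>z. \<bar>x0 z\<bar> + \<bar>k\<bar>)"
    using close by (intro pnorm_mono'[OF X_continuous[OF yX]
        continuous_on_add[OF continuous_on_rabs[OF X_continuous[OF x0]] continuous_on_const]])
      (simp add: y_def)
  also have "\<dots> \<le> pnorm G p (\<lambda>z. \<bar>x0 z\<bar>) + \<bar>k\<bar> * one_pnorm"
    using pnorm_add_const_le'[OF continuous_on_rabs[OF X_continuous[OF x0]], of "\<bar>k\<bar>"] by simp
  finally have "pnorm G p y \<le> pnorm G p x0 + \<bar>k\<bar> * one_pnorm" by (simp add: pnorm_abs')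
  then show ?thesis using xb M by (smt (verit) exp_gt_zero mult_left_mono mult_pos_pos zero_le_mult_iff)
qed

lemma pnorm_le_between:
  assumes x: "continuous_on (closure G) x" and xp: "continuous_on (closure G) xp"
    and xm: "continuous_on (closure G) xm"
    and le: "\<And>z. z \<in> G \<Longrightarrow> xm z \<le> x z" "\<And>z. z \<in> G \<Longrightarrow> x z \<le> xp z" and C: "C \<ge> 0"
  shows "pnorm G p x \<le> pnorm G p (\<lambda>z. xp z - C) + pnorm G p (\<lambda>z. xm z + C) + C * one_pnorm"
proof -
  have cp: "continuous_on (closure G) (\<lambda>z. \<bar>xp z - C\<bar>)"
    by (rule continuous_on_rabs[OF continuous_on_diff[OF xp continuous_on_const]])
  have cm: "continuous_on (closure G) (\<lambda>z. \<bar>xm z + C\<bar>)"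
    by (rule continuous_on_rabs[OF continuous_on_add[OF xm continuous_on_const]])
  have cont: "continuous_on (closure G) (\<lambda>z. \<bar>xp z - C\<bar> + \<bar>xm z + C\<bar>)"
    by (rule continuous_on_add[OF cp cm])
  have "\<bar>x z\<bar> \<le> \<bar>(\<bar>xp z - C\<bar> + \<bar>xm z + C\<bar>) + C\<bar>" if "z \<in> G" for z
  proof -
    have "x z \<le> \<bar>xp z - C\<bar> + \<bar>xm z + C\<bar> + C"
      using le(2)[OF that] abs_ge_self[of "xp z - C"] abs_ge_zero[of "xm z + C"] by linarith
    moreover have "- x z \<le> \<bar>xp z - C\<bar> + \<bar>xm z + C\<bar> + C"
      using le(1)[OF that] abs_ge_minus_self[of "xm z + C"] abs_ge_zero[of "xp z - C"] by linarith
    ultimately show ?thesis using C by (simp add: abs_le_iff)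
  qed
  then have "pnorm G p x \<le> pnorm G p (\<lambda>z. (\<bar>xp z - C\<bar> + \<bar>xm z + C\<bar>) + C)"
    by (rule pnorm_mono'[OF x continuous_on_add[OF cont continuous_on_const]])
  also have "\<dots> \<le> pnorm G p (\<lambda>z. \<bar>xp z - C\<bar> + \<bar>xm z + C\<bar>) + C * one_pnorm"
    using pnorm_add_const_le'[OF cont, of C] C by simp
  also have "pnorm G p (\<lambda>z. \<bar>xp z - C\<bar> + \<bar>xm z + C\<bar>)
      \<le> pnorm G p (\<lambda>z. xp z - C) + pnorm G p (\<lambda>z. xm z + C)"
    using pnorm_triangle'[OF cp cm]
    by (simp only: pnorm_abs'[of "\<lambda>z. xp z - C"] pnorm_abs'[of "\<lambda>z. xm z + C"])
  finally show ?thesis by simp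
qed

lemma estimate_with_margin:
  assumes est: "exp_ISS_estimate_Q a f G X p M c \<gamma>" and M: "M \<ge> 0" and c: "c \<ge> 0" and t: "t \<ge> 0"
    and x0: "x0 \<in> X" and u: "u \<in> Uset x0" and sol: "classical_solution a f G x0 u x"
    and xX: "x t \<in> X" and C: "C > Unorm G u"
  shows "pnorm G p (x t) \<le> 2 * M * exp (- c * t) * pnorm G p x0 + (2 * \<gamma> C + (1 + 2 * M) * one_pnorm * C)"
proof -
  have uC: "u \<in> Ucal G" using Uset_subset[OF x0 u] by blast
  have u0: "u 0 z = x0 z" if "z \<in> frontier G" for z using Uset_subset[OF x0 u] that by blast
  have ub: "\<bar>u s z\<bar> \<le> Unorm G u" if "s \<ge> 0" "z \<in> frontier G" for s z
    by (rule abs_le_Unorm[OF uC that])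
  have x0b: "\<bar>x0 z\<bar> \<le> Unorm G u" "\<bar>- x0 z\<bar> \<le> Unorm G u" if "z \<in> frontier G" for z
    using ub[OF order.refl that] u0[OF that] by simp_all
  have bnd: "\<bar>u s z\<bar> \<le> C" if "s \<ge> 0" "z \<in> frontier G" for s z
    using ub[OF that] C by linarith
  obtain s where "s \<in> frontier G" using frontier_nonempty by blast
  then have C0: "C \<ge> 0" using bnd[OF order.refl] abs_ge_zero[of "u 0 s"] by fastforce
  obtain xp0 where xp0: "xp0 \<in> X" "\<And>z. z \<in> G \<Longrightarrow> x0 z \<le> xp0 z" "\<And>z. z \<in> frontier G \<Longrightarrow> xp0 z = C"
    "\<And>z. z \<in> G \<Longrightarrow> \<bar>xp0 z - C\<bar> \<le> \<bar>x0 z\<bar> + \<bar>C\<bar>"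
    using upper_barrier[OF x0 x0b(1) C] abs_of_nonneg[OF C0] by metis
  have nx0: "(\<lambda>z. - x0 z) \<in> X" using X_scale[OF x0, of "- 1"] by simp
  obtain xq0 where xq0: "xq0 \<in> X" "\<And>z. z \<in> G \<Longrightarrow> - x0 z \<le> xq0 z" "\<And>z. z \<in> frontier G \<Longrightarrow> xq0 z = C"
    "\<And>z. z \<in> G \<Longrightarrow> \<bar>xq0 z - C\<bar> \<le> \<bar>- x0 z\<bar> + C"
    using upper_barrier[OF nx0 x0b(2) C] by blast
  define xm0 where "xm0 = (\<lambda>z. - xq0 z)"
  have xm0: "xm0 \<in> X" using X_scale[OF xq0(1), of "- 1"] by (simp add: xm0_def)
  have xm0_le: "xm0 z \<le> x0 z" if "z \<in> G" for z using xq0(2)[OF that] by (simp add: xm0_def)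
  have xm0_bd: "xm0 z = - C" if "z \<in> frontier G" for z using xq0(3)[OF that] by (simp add: xm0_def)
  have xm0_close: "\<bar>xm0 z - - C\<bar> \<le> \<bar>x0 z\<bar> + \<bar>- C\<bar>" if "z \<in> G" for z
    using xq0(4)[OF that] C0 by (simp add: xm0_def abs_minus_commute)
  obtain xp where solp: "classical_solution a f G xp0 (\<lambda>s z. C) xp" and xpX: "\<forall>t\<ge>0. xp t \<in> X"
    using solution_exists[OF xp0(1) constant_input_in_Uset[OF xp0(1) ballI[OF xp0(3)]]] by blast
  obtain xm where solm: "classical_solution a f G xm0 (\<lambda>s z. - C) xm" and xmX: "\<forall>t\<ge>0. xm t \<in> X"
    using solution_exists[OF xm0 constant_input_in_Uset[OF xm0 ballI[OF xm0_bd]]] by blast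
  have u_le: "u s z \<le> C" and le_u: "- C \<le> u s z" if "s \<ge> 0" "z \<in> frontier G" for s z
    using abs_le_D1[OF bnd[OF that]] abs_le_D2[OF bnd[OF that]] by linarith+
  have above: "x t z \<le> xp t z" if "z \<in> closure G" for z
    by (rule comparison_principle[OF open_G bounded_G psd lip sol solp xp0(2) u_le t that])
  have below: "xm t z \<le> x t z" if "z \<in> closure G" for z
    by (rule comparison_principle[OF open_G bounded_G psd lip solm sol xm0_le le_u t that])
  define E where "E = exp (- c * t)"
  have "pnorm G p (x t) \<le> pnorm G p (\<lambda>z. xp t z - C) + pnorm G p (\<lambda>z. xm t z + C) + C * one_pnorm"
    by (rule pnorm_le_between[OF X_continuous[OF xX] X_continuous[OF xpX[rule_format, OF t]]
          X_continuous[OF xmX[rule_format, OF t]] below[OF subsetD[OF closure_subset]]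
          above[OF subsetD[OF closure_subset]] C0])
  moreover have "pnorm G p (\<lambda>z. xp t z - C) \<le> M * E * (pnorm G p x0 + C * one_pnorm) + \<gamma> C"
    using barrier_estimate[OF est M t x0 xp0(1) xp0(3) xp0(4) solp]
    unfolding abs_of_nonneg[OF C0] E_def .
  moreover have "pnorm G p (\<lambda>z. xm t z + C) \<le> M * E * (pnorm G p x0 + C * one_pnorm) + \<gamma> C"
    using barrier_estimate[OF est M t x0 xm0 xm0_bd xm0_close solm]
    unfolding diff_minus_eq_add abs_minus_cancel abs_of_nonneg[OF C0] E_def .
  moreover have "M * E * (pnorm G p x0 + C * one_pnorm) = M * E * pnorm G p x0 + M * E * (C * one_pnorm)"
    by (rule distrib_left)
  moreover have "M * E * (C * one_pnorm) \<le> M * (C * one_pnorm)"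
  proof (rule mult_right_mono)
    have "E \<le> 1" using c t by (simp add: E_def)
    then show "M * E \<le> M" by (rule mult_left_le[OF _ M])
  qed (use C0 one_pnorm_nonneg in simp)
  moreover have "(1 + 2 * M) * one_pnorm * C = C * one_pnorm + 2 * (M * (C * one_pnorm))"
    by (simp add: algebra_simps)
  moreover have "2 * M * E * pnorm G p x0 = 2 * (M * E * pnorm G p x0)" by simp
  ultimately show ?thesis unfolding E_def[symmetric] by linarith
qed

lemma exp_ISS_estimate_if_Q:
  assumes est: "exp_ISS_estimate_Q a f G X p M c \<gamma>" and M: "M \<ge> 0" and c: "c \<ge> 0" and K: "Kinf \<gamma>"
  shows "exp_ISS_estimate a f G X Uset p (2 * M) c (\<lambda>r. 2 * \<gamma> r + (1 + 2 * M) * one_pnorm * r)"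
  unfolding exp_ISS_estimate_def
proof (intro allI impI ballI)
  fix t :: real and x0 u assume t: "t \<ge> 0" and x0: "x0 \<in> X" and u: "u \<in> Uset x0"
  obtain x where sol: "classical_solution a f G x0 u x" and xX: "\<forall>t\<ge>0. x t \<in> X"
    using solution_exists[OF x0 u] by blast
  obtain s where s: "s \<in> frontier G" using frontier_nonempty by blast
  have "\<bar>u 0 s\<bar> \<le> Unorm G u" using abs_le_Unorm[OF _ order.refl s] Uset_subset[OF x0 u] by blast
  then have m: "Unorm G u \<ge> 0" by (rule order_trans[OF abs_ge_zero])
  have "continuous_on {0..} \<gamma>" using K by (simp add: Kinf_def)
  then have cont: "continuous_on {0..}
      (\<lambda>r. 2 * M * exp (- c * t) * pnorm G p x0 + (2 * \<gamma> r + (1 + 2 * M) * one_pnorm * r))"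
    by (intro continuous_on_add continuous_on_mult continuous_on_const continuous_on_id)
  have "pnorm G p (x t) \<le> 2 * M * exp (- c * t) * pnorm G p x0 + (2 * \<gamma> (Unorm G u) + (1 + 2 * M) * one_pnorm * Unorm G u)"
  proof (rule le_of_le_right_shifts[OF cont m])
    fix e :: real assume e: "e > 0"
    show "pnorm G p (x t) \<le> 2 * M * exp (- c * t) * pnorm G p x0
        + (2 * \<gamma> (Unorm G u + e) + (1 + 2 * M) * one_pnorm * (Unorm G u + e))"
      by (rule estimate_with_margin[OF est M c t x0 u sol xX[rule_format, OF t]]) (use e in simp)
  qed
  then show "pnorm G p (phi a f G t x0 u) \<le> 2 * M * exp (- c * t) * pnorm G p x0
      + (2 * \<gamma> (Unorm G u) + (1 + 2 * M) * one_pnorm * Unorm G u)"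
    unfolding pnorm_phi[OF sol t] .
qed

lemma exp_ISS_Q_if_exp_ISS_constant_inputs:
  assumes "\<exists>M c \<gamma>. M > 0 \<and> c > 0 \<and> Kinf \<gamma> \<and> exp_ISS_estimate_constant_inputs a f G X Uset p M c \<gamma>"
  shows "\<exists>M c \<gamma>. M > 0 \<and> c > 0 \<and> Kinf \<gamma> \<and> exp_ISS_estimate_Q a f G X p M c \<gamma>"
proof -
  obtain M c \<gamma> where "M > 0" "c > 0" "Kinf \<gamma>" "exp_ISS_estimate_constant_inputs a f G X Uset p M c \<gamma>"
    using assms by blast
  moreover have "Kinf (\<lambda>r. 1 * \<gamma> r + ((M + 1) * one_pnorm) * r)"
    using \<open>Kinf \<gamma>\<close> \<open>M > 0\<close> one_pnorm_nonneg by (intro Kinf_linear_combination) auto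
  ultimately show ?thesis
    using exp_ISS_estimate_Q_if_constant_inputs[of M c \<gamma>] by (intro exI[of _ M] exI[of _ c]) auto
qed

lemma exp_ISS_if_exp_ISS_Q:
  assumes "\<exists>M c \<gamma>. M > 0 \<and> c > 0 \<and> Kinf \<gamma> \<and> exp_ISS_estimate_Q a f G X p M c \<gamma>"
  shows "\<exists>M c \<gamma>. M > 0 \<and> c > 0 \<and> Kinf \<gamma> \<and> exp_ISS_estimate a f G X Uset p M c \<gamma>"
proof -
  obtain M c \<gamma> where "M > 0" "c > 0" "Kinf \<gamma>" "exp_ISS_estimate_Q a f G X p M c \<gamma>"
    using assms by blast
  moreover have "Kinf (\<lambda>r. 2 * \<gamma> r + ((1 + 2 * M) * one_pnorm) * r)"
    using \<open>Kinf \<gamma>\<close> \<open>M > 0\<close> one_pnorm_nonneg by (intro Kinf_linear_combination) auto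
  ultimately show ?thesis
    using exp_ISS_estimate_if_Q[of M c \<gamma>] by (intro exI[of _ "2 * M"] exI[of _ c]) auto
qed

end

theorem mainTheorem6:
  fixes G :: "(real^'n) set"
    and a :: "'n \<Rightarrow> 'n \<Rightarrow> real^'n \<Rightarrow> real"
    and f :: "real^'n \<Rightarrow> real \<Rightarrow> real^'n \<Rightarrow> real"
    and K :: real
    and X :: "(real^'n \<Rightarrow> real) set"
    and Uset :: "(real^'n \<Rightarrow> real) \<Rightarrow> (real \<Rightarrow> real^'n \<Rightarrow> real) set"
    and p :: ereal
  assumes "open G" and "bounded G" and "G \<noteq> {}"
    and "\<forall>i j. continuous_on (closure G) (a i j)"
    and "continuous_on (closure G \<times> UNIV \<times> UNIV) (\<lambda>(z,w,\<xi>). f z w \<xi>)"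
    and "K > 0"
    and "\<forall>z\<in>closure G. \<forall>\<xi>::real^'n. (\<Sum>i\<in>UNIV. \<Sum>j\<in>UNIV. a i j z * \<xi>$i * \<xi>$j) \<ge> K * (norm \<xi>)\<^sup>2"
    and "H1 a f G X Uset" and "H2 G f" and "H3 G X"
    and "1 \<le> p"
  shows "((\<exists>M c \<gamma>. M > 0 \<and> c > 0 \<and> Kinf \<gamma> \<and>
            (\<forall>t\<ge>0. \<forall>x\<in>X. \<forall>u\<in>Uset x.
               pnorm G p (phi a f G t x u) \<le> M * exp (- c * t) * pnorm G p x + \<gamma> (Unorm G u)))
        \<longleftrightarrow>
          (\<exists>M c \<gamma>. M > 0 \<and> c > 0 \<and> Kinf \<gamma> \<and>
            (\<forall>t\<ge>0. \<forall>x\<in>X. \<forall>u\<in>Uset x. (\<forall>s\<ge>0. \<forall>z\<in>frontier G. u s z = u 0 z) \<longrightarrow>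
               pnorm G p (phi a f G t x u) \<le> M * exp (- c * t) * pnorm G p x + \<gamma> (Unorm G u))))
       \<and>
         ((\<exists>M c \<gamma>. M > 0 \<and> c > 0 \<and> Kinf \<gamma> \<and>
            (\<forall>t\<ge>0. \<forall>x\<in>X. \<forall>u\<in>Uset x. (\<forall>s\<ge>0. \<forall>z\<in>frontier G. u s z = u 0 z) \<longrightarrow>
               pnorm G p (phi a f G t x u) \<le> M * exp (- c * t) * pnorm G p x + \<gamma> (Unorm G u)))
        \<longleftrightarrow>
          (\<exists>M c \<gamma>. M > 0 \<and> c > 0 \<and> Kinf \<gamma> \<and>
            (\<forall>t\<ge>0. \<forall>y\<in>{y\<in>X. \<forall>z\<in>frontier G. y z = 0}. \<forall>k::real.
               pnorm G p (phiY a f G t y (\<lambda>s z. k)) \<le> M * exp (- c * t) * pnorm G p y + \<gamma> \<bar>k\<bar>)))"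
proof -
  have psd: "(\<Sum>i\<in>UNIV. \<Sum>j\<in>UNIV. a i j z * \<xi>$i * \<xi>$j) \<ge> 0" if "z \<in> G" for z \<xi>
    using assms(7) closure_subset that assms(6) by (meson order_trans subsetD zero_le_mult_iff zero_le_power2 less_imp_le)
  interpret parabolic_ISS_setting G a f X Uset p
    using assms(1-3,8,10,11) psd H2_one_sided_Lipschitz[OF assms(9)] by unfold_locales auto
  note defs = exp_ISS_estimate_def exp_ISS_estimate_constant_inputs_def exp_ISS_estimate_Q_def
  note i_ii = exp_ISS_constant_inputs_if_exp_ISS[unfolded defs]
    and ii_iii = exp_ISS_Q_if_exp_ISS_constant_inputs[unfolded defs]
    and iii_i = exp_ISS_if_exp_ISS_Q[unfolded defs]
  show ?thesis
    by (intro conjI iffI) (erule i_ii, erule iii_i[OF ii_iii], erule ii_iii, erule i_ii[OF iii_i])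
qed

end
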